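(* Let $n\ge2$, $d\ge2$, $0\ne\mathcal C=[c_{j_1,\ldots,j_d}]\in\otimes^d\mathbb{R}^n$, $c_{\min}=\min c_{j_1,\ldots,j_d}$, $c=\max|c_{j_1,\ldots,j_d}|$, and $\mathbf p_1,\ldots,\mathbf p_d\in\Delta^n$. Let $\mathcal C(\mathbf x_1,\ldots,\mathbf x_d)$ be the tensor with entries $c_{j_1,\ldots,j_d}-x_{j_1,1}-\cdots-x_{j_d,d}$, $\hat{\mathrm D}=\{(\mathbf x_1,\ldots,\mathbf x_d)\in(\mathbb{R}^n)^d:\mathcal C(\mathbf x_1,\ldots,\mathbf x_d)>0\}$, $\mathrm D=\{(\mathbf x_i)\in\hat{\mathrm D}:\mathbf 1_n^\top\mathbf x_1=\cdots=\mathbf 1_n^\top\mathbf x_d\}$. Then: (a) $\tau(\mathcal C,P)\ge c_{\min}$. (b) $\tau(\mathcal C,P)=\max_{\mathcal C(\mathbf x_1,\ldots,\mathbf x_d)\ge0}\sum_i\mathbf p_i^\top\mathbf x_i=\sup_{\hat{\mathrm D}}\sum_i\mathbf p_i^\top\mathbf x_i=\sup_{\mathrm D}\sum_i\mathbf p_i^\top\mathbf x_i$. (c) If the $\mathbf p_i$ are entrywise positive and $\mathcal C(\mathbf x_1,\ldots,\mathbf x_d)\ge0$, $\sum_i\mathbf p_i^\top\mathbf x_i\ge c_{\min}$, $\mathbf 1_n^\top\mathbf x_1=\cdots=\mathbf 1_n^\top\mathbf x_d$, then $\sqrt{\sum_i\|\mathbf x_i\|^2}<\frac{2c\sqrt n}{\prod_{i=1}^d\min_jp_{j,i}}$.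 (d) With $t=\frac{(-1+c_{\min})n}{d}$ and $\mathbf x_{i,0}=\frac tn\mathbf 1_n$, $(\mathbf x_{1,0},\ldots,\mathbf x_{d,0})\in\mathrm D$. (e) With positive $\mathbf p_i$ and $r^2=\frac{(9c^2+1)n}{(\prod_i\min_jp_{j,i})^2}$, the open ball $\{\sum_i\|\mathbf x_i-\mathbf x_{i,0}\|^2<r^2\}$ contains all $(\mathbf x_1,\ldots,\mathbf x_d)$ satisfying the conditions in (c). (f) With $\mathrm D_1=\mathrm D\cap\{\sum_i\|\mathbf x_i-\mathbf x_{i,0}\|^2<r^2\}$, every boundary point of $\mathrm D_1$ is at Euclidean distance at least $\frac1{\sqrt d}$ from $(\mathbf x_{1,0},\ldots,\mathbf x_{d,0})$. (g) $\hat\beta=-\sum_{j_1,\ldots,j_d=1}^n\log(c_{j_1,\ldots,j_d}-x_{j_1,1}-\cdots-x_{j_d,d})-\log(r^2-\sum_i\|\mathbf x_i-\mathbf x_{i,0}\|^2)+\log r^2$ is a barrier function for $\mathrm D_1$ with $\theta(\hat\beta)\le n^d+1$.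
   Context: $\Delta^n$: probability vectors in $\mathbb{R}^n$. $\tau(\mathcal C,P)=\min\{\langle\mathcal C,\mathcal V\rangle:\mathcal V\ge0,\ \text{the }i\text{-th marginal of }\mathcal V\text{ is }\mathbf p_i\ \forall i\}$, where the $i$-th marginal is the vector of sums of entries over all indices except the $i$-th. A convex $f\in C^3(\mathrm D)$ on a convex domain is $a$-self-concordant if $|\partial^3f(\mathbf x)[\mathbf u,\mathbf u,\mathbf u]|\le2a^{-1/2}(\mathbf u^\top\partial^2f(\mathbf x)\mathbf u)^{3/2}$ for all $\mathbf x,\mathbf u$; strongly so if $f\to\infty$ at $\partial\mathrm D$; $\theta(f)=\sup_{\mathbf x}\inf\{\lambda^2:|\nabla f(\mathbf x)^\top\mathbf u|^2\le\lambda^2a\,\mathbf u^\top\partial^2f(\mathbf x)\mathbf u\ \forall\mathbf u\}$; a barrier is strongly self-concordant with finite $\theta$. *)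

theory Defs
  imports "HOL-Analysis.Analysis"
begin

text \<open>Index conventions: the tensor index set is the finite type of multi-indices
  'd \<Rightarrow> 'n (n = CARD('n), d = CARD('d)); a tuple (x_1,...,x_d) of vectors in R^n is
  an element x :: real^'n^'d, with x_{j,i} = x$i$j.\<close>

definition prob_vec :: "real^'n::finite \<Rightarrow> bool" where
  "prob_vec q \<longleftrightarrow> (\<forall>j. 0 \<le> q$j) \<and> (\<Sum>j\<in>UNIV. q$j) = 1"

definition marginal :: "(('d::finite \<Rightarrow> 'n::finite) \<Rightarrow> real) \<Rightarrow> 'd \<Rightarrow> real^'n" where
  "marginal V i = (\<chi> j. \<Sum>J\<in>{J. J i = j}. V J)"

definition tau :: "(('d::finite \<Rightarrow> 'n::finite) \<Rightarrow> real) \<Rightarrow> real^'n^'d \<Rightarrow> real" where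
  "tau C P = Inf {(\<Sum>J\<in>UNIV. C J * V J) | V. (\<forall>J. 0 \<le> V J) \<and> (\<forall>i. marginal V i = P$i)}"

definition Cx :: "(('d::finite \<Rightarrow> 'n::finite) \<Rightarrow> real) \<Rightarrow> real^'n^'d \<Rightarrow> ('d \<Rightarrow> 'n) \<Rightarrow> real" where
  "Cx C x J = C J - (\<Sum>i\<in>UNIV. x$i$(J i))"

definition objective :: "real^'n::finite^'d::finite \<Rightarrow> real^'n^'d \<Rightarrow> real" where
  "objective P x = (\<Sum>i\<in>UNIV. P$i \<bullet> x$i)"

definition rowsum :: "real^'n::finite^'d::finite \<Rightarrow> 'd \<Rightarrow> real" where
  "rowsum x i = (\<Sum>j\<in>UNIV. x$i$j)"

definition Dhat :: "(('d::finite \<Rightarrow> 'n::finite) \<Rightarrow> real) \<Rightarrow> (real^'n^'d) set" where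
  "Dhat C = {x. \<forall>J. 0 < Cx C x J}"

definition Dom :: "(('d::finite \<Rightarrow> 'n::finite) \<Rightarrow> real) \<Rightarrow> (real^'n^'d) set" where
  "Dom C = {x \<in> Dhat C. \<forall>i i'. rowsum x i = rowsum x i'}"

definition cmin :: "(('d::finite \<Rightarrow> 'n::finite) \<Rightarrow> real) \<Rightarrow> real" where
  "cmin C = Min (range C)"

definition cmax :: "(('d::finite \<Rightarrow> 'n::finite) \<Rightarrow> real) \<Rightarrow> real" where
  "cmax C = Max (range (\<lambda>J. \<bar>C J\<bar>))"

definition pmin :: "real^'n::finite^'d::finite \<Rightarrow> real" where
  "pmin P = (\<Prod>i\<in>UNIV. Min (range (\<lambda>j. P$i$j)))"

definition x0 :: "(('d::finite \<Rightarrow> 'n::finite) \<Rightarrow> real) \<Rightarrow> real^'n^'d" where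
  "x0 C = (let t = (-1 + cmin C) * real CARD('n) / real CARD('d)
           in (\<chi> i j. t / real CARD('n)))"

definition rsq :: "(('d::finite \<Rightarrow> 'n::finite) \<Rightarrow> real) \<Rightarrow> real^'n^'d \<Rightarrow> real" where
  "rsq C P = (9 * (cmax C)^2 + 1) * real CARD('n) / (pmin P)^2"

definition D1 :: "(('d::finite \<Rightarrow> 'n::finite) \<Rightarrow> real) \<Rightarrow> real^'n^'d \<Rightarrow> (real^'n^'d) set" where
  "D1 C P = Dom C \<inter> {x. (\<Sum>i\<in>UNIV. (norm (x$i - x0 C $i))^2) < rsq C P}"

definition betahat :: "(('d::finite \<Rightarrow> 'n::finite) \<Rightarrow> real) \<Rightarrow> real^'n^'d \<Rightarrow> real^'n^'d \<Rightarrow> real" where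
  "betahat C P x = - (\<Sum>J\<in>UNIV. ln (Cx C x J))
       - ln (rsq C P - (\<Sum>i\<in>UNIV. (norm (x$i - x0 C $i))^2)) + ln (rsq C P)"

text \<open>A domain S is a convex set that is open in its affine hull; admissible directions u
  are those of the linear space parallel to the affine hull of S.\<close>

definition dirs :: "'a::euclidean_space set \<Rightarrow> 'a set" where
  "dirs S = span {y - x | x y. x \<in> S \<and> y \<in> S}"

text \<open>f is C^3 on S (derivatives taken within S, i.e. relative to its affine hull).\<close>
definition C3_on :: "'a::euclidean_space set \<Rightarrow> ('a \<Rightarrow> real) \<Rightarrow> bool" where
  "C3_on S f \<longleftrightarrow> (\<exists>(f1::'a \<Rightarrow> ('a \<Rightarrow>\<^sub>L real)) (f2::'a \<Rightarrow> ('a \<Rightarrow>\<^sub>L 'a \<Rightarrow>\<^sub>L real))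
        (f3::'a \<Rightarrow> ('a \<Rightarrow>\<^sub>L 'a \<Rightarrow>\<^sub>L 'a \<Rightarrow>\<^sub>L real)).
      (\<forall>x\<in>S. (f has_derivative blinfun_apply (f1 x)) (at x within S)
           \<and> (f1 has_derivative blinfun_apply (f2 x)) (at x within S)
           \<and> (f2 has_derivative blinfun_apply (f3 x)) (at x within S))
      \<and> continuous_on S f3)"

text \<open>k-th derivative of f at x in direction u, i.e. the diagonal form
  \<partial>^k f(x)[u,...,u], as the k-th derivative of t \<mapsto> f(x + t u) at 0.\<close>
definition dderiv :: "nat \<Rightarrow> ('a::euclidean_space \<Rightarrow> real) \<Rightarrow> 'a \<Rightarrow> 'a \<Rightarrow> real" where
  "dderiv k f x u = (deriv ^^ k) (\<lambda>t. f (x + t *\<^sub>R u)) 0"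

definition self_concordant :: "real \<Rightarrow> ('a::euclidean_space \<Rightarrow> real) \<Rightarrow> 'a set \<Rightarrow> bool" where
  "self_concordant a f S \<longleftrightarrow> 0 < a \<and> convex S \<and> openin (top_of_set (affine hull S)) S
     \<and> convex_on S f \<and> C3_on S f
     \<and> (\<forall>x\<in>S. \<forall>u\<in>dirs S.
          \<bar>dderiv 3 f x u\<bar> \<le> 2 * a powr (-1/2) * (dderiv 2 f x u) powr (3/2))"

definition strongly_self_concordant :: "real \<Rightarrow> ('a::euclidean_space \<Rightarrow> real) \<Rightarrow> 'a set \<Rightarrow> bool" where
  "strongly_self_concordant a f S \<longleftrightarrow> self_concordant a f S
     \<and> (\<forall>y\<in>rel_frontier S. filterlim f at_top (at y within S))"

definition theta :: "real \<Rightarrow> ('a::euclidean_space \<Rightarrow> real) \<Rightarrow> 'a set \<Rightarrow> ereal" where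
  "theta a f S = (SUP x\<in>S. Inf {ereal s | s. 0 \<le> s \<and>
       (\<forall>u\<in>dirs S. (dderiv 1 f x u)^2 \<le> s * a * dderiv 2 f x u)})"

definition barrier :: "real \<Rightarrow> ('a::euclidean_space \<Rightarrow> real) \<Rightarrow> 'a set \<Rightarrow> bool" where
  "barrier a f S \<longleftrightarrow> strongly_self_concordant a f S \<and> theta a f S < \<infinity>"

end

theory Submission
  imports Defs
begin

(* (a) and (b) are linear programming duality for the multi-marginal transport problem: Farkas'
   lemma gives a dual optimum, and shifting each row of it by a constant balances the row sums
   without changing the objective, while a small uniform shift makes all dual constraints strict.

   For (c) and (e), dual feasibility at the row maxima and the lower bound on the objective
   confine row i of x to an interval of length 2 c / min_j p_{j,i} below its maximum.  All rows
   have the same mean, so a variance bound for bounded variables controls the norm of x.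

   For (f) and (g), betahat is ln r^2 minus the sum of the logarithms of n^d + 1 concave
   quadratics whose Hessians are multiples of the identity.  Writing A_k and B_k for the first
   and second order terms of the k-th factor along a direction, the derivatives of such a
   barrier are sums of A_k, A_k^2 + B_k and 2 A_k^3 + 3 A_k B_k with B_k >= 0, which gives
   self-concordance and theta <= n^d + 1 by elementary inequalities.  D1 contains the ball of
   radius 1 / sqrt d around x0 within the subspace of balanced tuples, which yields (f). *)

section \<open>Duality for the multi-marginal transport problem\<close>

lemma lp_weak_duality:
  fixes a :: "'k::finite \<Rightarrow> 'a::real_inner"
  assumes "\<forall>k. y \<bullet> a k \<le> c k" "\<forall>k. 0 \<le> V k" "(\<Sum>k\<in>UNIV. V k *\<^sub>R a k) = p"
  shows "p \<bullet> y \<le> (\<Sum>k\<in>UNIV. c k * V k)"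
proof -
  have "p \<bullet> y = (\<Sum>k\<in>UNIV. V k * (y \<bullet> a k))"
    using assms(3) by (auto simp: inner_commute[of p] inner_sum_right)
  also have "\<dots> \<le> (\<Sum>k\<in>UNIV. c k * V k)"
    using assms(1,2) by (intro sum_mono) (simp add: mult.commute mult_left_mono)
  finally show ?thesis .
qed

lemma farkas_lemma:
  fixes g :: "'k::finite \<Rightarrow> 'a::euclidean_space"
  assumes "\<nexists>l. (\<forall>k. 0 \<le> l k) \<and> z = (\<Sum>k\<in>UNIV. l k *\<^sub>R g k)"
  shows "\<exists>w. w \<bullet> z < 0 \<and> (\<forall>k. 0 \<le> w \<bullet> g k)"
proof -
  define K where "K = {(\<Sum>k\<in>UNIV. l k *\<^sub>R g k) | l. \<forall>k. 0 \<le> l k}"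
  have "convex_cone K"
    unfolding convex_cone_iff
  proof (intro conjI ballI allI impI)
    show "0 \<in> K" unfolding K_def by (auto intro!: exI[of _ "\<lambda>_. 0"])
    fix x y assume "x \<in> K" "y \<in> K"
    then obtain l m where "\<forall>k. 0 \<le> l k" "\<forall>k. 0 \<le> m k"
      "x = (\<Sum>k\<in>UNIV. l k *\<^sub>R g k)" "y = (\<Sum>k\<in>UNIV. m k *\<^sub>R g k)"
      unfolding K_def by blast
    then show "x + y \<in> K" unfolding K_def
      by (auto intro!: exI[of _ "\<lambda>k. l k + m k"] simp: sum.distrib scaleR_add_left)
  next
    fix x and c :: real assume "x \<in> K" "0 \<le> c"
    then obtain l where "\<forall>k. 0 \<le> l k" "x = (\<Sum>k\<in>UNIV. l k *\<^sub>R g k)"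
      unfolding K_def by blast
    then show "c *\<^sub>R x \<in> K" using \<open>0 \<le> c\<close> unfolding K_def
      by (auto intro!: exI[of _ "\<lambda>k. c * l k"] simp: scaleR_sum_right)
  qed
  have g_in_K: "g k \<in> K" for k
    unfolding K_def
    by (auto intro!: exI[of _ "\<lambda>k'. if k' = k then 1 else 0"]
        simp: if_distrib[where f = "\<lambda>c. c *\<^sub>R g _"] cong: if_cong)
  define H where "H = convex_cone hull (range g)"
  have "H \<subseteq> K"
    unfolding H_def using \<open>convex_cone K\<close> g_in_K by (intro hull_minimal) auto
  then have "z \<notin> H" using assms unfolding K_def by blast
  moreover have "closed H" "convex H"
    unfolding H_def by (simp_all add: closed_convex_cone_hull convex_convex_cone_hull)
  ultimately obtain w b where wb: "w \<bullet> z < b" "\<forall>x\<in>H. b < w \<bullet> x"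
    using separating_hyperplane_closed_point by metis
  have "b < 0"
    using wb convex_cone_hull_contains_0[of "range g"] unfolding H_def by fastforce
  have "0 \<le> w \<bullet> g k" for k
  proof (rule ccontr)
    assume neg: "\<not> 0 \<le> w \<bullet> g k"
    define t where "t = b / (w \<bullet> g k)"
    have "0 \<le> t" using neg \<open>b < 0\<close> by (simp add: t_def divide_nonpos_neg)
    then have "t *\<^sub>R g k \<in> H" unfolding H_def by (simp add: convex_cone_hull_mul hull_inc)
    moreover have "w \<bullet> (t *\<^sub>R g k) = b" using neg by (simp add: t_def)
    ultimately show False using wb by fastforce
  qed
  with wb \<open>b < 0\<close> show ?thesis by (intro exI[of _ w]) auto
qed

lemma sum_UNIV_option: "(\<Sum>k\<in>UNIV. f k) = f None + (\<Sum>k\<in>UNIV. f (Some k))"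
  for f :: "'k::finite option \<Rightarrow> 'b::comm_monoid_add"
  by (simp add: UNIV_option_conv sum.reindex)

lemma lp_homogeneous_lower_bound:
  fixes a :: "'k::finite \<Rightarrow> 'a::real_vector" and c :: "'k \<Rightarrow> real"
  assumes feasible: "\<forall>k. 0 \<le> V0 k" "(\<Sum>k\<in>UNIV. V0 k *\<^sub>R a k) = p"
    and lower: "\<And>V. \<forall>k. 0 \<le> V k \<Longrightarrow> (\<Sum>k\<in>UNIV. V k *\<^sub>R a k) = p \<Longrightarrow> T \<le> (\<Sum>k\<in>UNIV. c k * V k)"
    and V: "\<forall>k. 0 \<le> V k" "0 \<le> m" "(\<Sum>k\<in>UNIV. V k *\<^sub>R a k) = m *\<^sub>R p"
  shows "m * T \<le> (\<Sum>k\<in>UNIV. c k * V k)"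
proof (rule ccontr)
  assume contra: "\<not> m * T \<le> (\<Sum>k\<in>UNIV. c k * V k)"
  \<comment> \<open>then for small \<open>s > 0\<close> the feasible plan \<open>(V + s V0) / (m + s)\<close> costs less than \<open>T\<close>\<close>
  define e where "e = m * T - (\<Sum>k\<in>UNIV. c k * V k)"
  define s where "s = e / ((\<Sum>k\<in>UNIV. c k * V0 k) - T + 1)"
  define W where "W k = (V k + s * V0 k) / (m + s)" for k
  have "T \<le> (\<Sum>k\<in>UNIV. c k * V0 k)" using lower feasible by blast
  moreover have "0 < e" using contra by (simp add: e_def)
  ultimately have "0 < s" "s * ((\<Sum>k\<in>UNIV. c k * V0 k) - T) < e"
    by (auto simp: s_def field_simps)
  then have "0 < m + s" "\<forall>k. 0 \<le> W k" using V feasible(1) by (auto simp: W_def)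
  have "(\<Sum>k\<in>UNIV. W k *\<^sub>R a k)
      = (1 / (m + s)) *\<^sub>R ((\<Sum>k\<in>UNIV. V k *\<^sub>R a k) + s *\<^sub>R (\<Sum>k\<in>UNIV. V0 k *\<^sub>R a k))"
    by (simp add: W_def scaleR_sum_right scaleR_add_right sum.distrib add_divide_distrib
        scaleR_add_left)
  then have "(\<Sum>k\<in>UNIV. W k *\<^sub>R a k) = p"
    using \<open>0 < m + s\<close> V(3) feasible(2) by (simp flip: scaleR_add_left)
  with \<open>\<forall>k. 0 \<le> W k\<close> have "T \<le> (\<Sum>k\<in>UNIV. c k * W k)" by (rule lower)
  also have "\<dots> = (m * T - e + s * (\<Sum>k\<in>UNIV. c k * V0 k)) / (m + s)"
    by (simp add: W_def e_def sum_divide_distrib[symmetric] sum.distrib sum_distrib_left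
        algebra_simps)
  finally show False
    using \<open>0 < m + s\<close> \<open>s * ((\<Sum>k\<in>UNIV. c k * V0 k) - T) < e\<close> by (simp add: field_simps)
qed

lemma lp_strong_duality:
  fixes a :: "'k::finite \<Rightarrow> 'a::euclidean_space" and c :: "'k \<Rightarrow> real"
  assumes feasible: "\<forall>k. 0 \<le> V0 k" "(\<Sum>k\<in>UNIV. V0 k *\<^sub>R a k) = p"
    and lower: "\<And>V. \<forall>k. 0 \<le> V k \<Longrightarrow> (\<Sum>k\<in>UNIV. V k *\<^sub>R a k) = p \<Longrightarrow> T \<le> (\<Sum>k\<in>UNIV. c k * V k)"
  shows "\<exists>y. (\<forall>k. y \<bullet> a k \<le> c k) \<and> T \<le> p \<bullet> y"
proof -
  define g :: "'k option \<Rightarrow> 'a \<times> real" where "g = case_option (-p, -T) (\<lambda>k. (a k, c k))"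
  have "\<nexists>l. (\<forall>k. 0 \<le> l k) \<and> (0, -1) = (\<Sum>k\<in>UNIV. l k *\<^sub>R g k)"
  proof
    assume "\<exists>l. (\<forall>k. 0 \<le> l k) \<and> (0, -1) = (\<Sum>k\<in>UNIV. l k *\<^sub>R g k)"
    then obtain l where l: "\<forall>k. 0 \<le> l k" "(0, -1) = (\<Sum>k\<in>UNIV. l k *\<^sub>R g k)"
      by blast
    have "(\<Sum>k\<in>UNIV. l (Some k) *\<^sub>R a k) = l None *\<^sub>R p"
      "(\<Sum>k\<in>UNIV. c k * l (Some k)) = l None * T - 1"
      using l(2) by (auto simp: sum_UNIV_option g_def fst_sum snd_sum prod_eq_iff algebra_simps)
    then show False
      using lp_homogeneous_lower_bound[OF feasible lower, of "\<lambda>k. l (Some k)" "l None"] l(1)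
      by simp
  qed
  then obtain w where w: "w \<bullet> (0, -1) < 0" "\<forall>k. 0 \<le> w \<bullet> g k"
    using farkas_lemma by blast
  obtain v \<gamma> where v: "w = (v, \<gamma>)" by fastforce
  have "0 < \<gamma>" using w(1) by (simp add: v)
  define y where "y = (- 1 / \<gamma>) *\<^sub>R v"
  have "y \<bullet> a k \<le> c k" for k
    using w(2)[rule_format, of "Some k"] \<open>0 < \<gamma>\<close> by (simp add: v g_def y_def field_simps)
  moreover have "T \<le> p \<bullet> y"
    using w(2)[rule_format, of None] \<open>0 < \<gamma>\<close> by (simp add: v g_def y_def field_simps inner_commute)
  ultimately show ?thesis by blast
qed

definition point_marginals :: "('d::finite \<Rightarrow> 'n::finite) \<Rightarrow> real^'n^'d" where
  "point_marginals J = (\<chi> i j. if J i = j then 1 else 0)"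

lemma inner_point_marginals: "x \<bullet> point_marginals J = (\<Sum>i\<in>UNIV. x$i$(J i))"
  by (simp add: point_marginals_def inner_vec_def if_distrib cong: if_cong)

lemma Cx_eq_inner: "Cx C x J = C J - x \<bullet> point_marginals J"
  by (simp add: Cx_def inner_point_marginals)

lemma objective_eq_inner: "objective P x = P \<bullet> x"
  by (simp add: objective_def inner_vec_def)

lemma marginals_eq_iff:
  "(\<forall>i. marginal V i = P$i) \<longleftrightarrow> (\<Sum>J\<in>UNIV. V J *\<^sub>R point_marginals J) = P"
proof -
  have "(\<Sum>J\<in>UNIV. V J *\<^sub>R point_marginals J) $ i $ j = marginal V i $ j" for i j
    by (simp add: point_marginals_def marginal_def if_distrib sum.If_cases
        cong: if_cong)
  then show ?thesis by (auto simp: vec_eq_iff)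
qed

lemma sum_eq_sum_marginal: "(\<Sum>J\<in>UNIV. V J) = (\<Sum>j\<in>UNIV. marginal V i $ j)"
  using sum.group[of UNIV UNIV "\<lambda>J. J i" V] by (simp add: marginal_def)

lemma marginal_product:
  assumes "\<forall>i. prob_vec (P$i)"
  shows "marginal (\<lambda>J. \<Prod>k\<in>UNIV. P$k$(J k)) i = P$i"
proof -
  have "marginal (\<lambda>J. \<Prod>k\<in>UNIV. P$k$(J k)) i $ j = P$i$j" for j
  proof -
    define B where "B k = (if k = i then {j} else UNIV)" for k
    have "{J. J i = j} = Pi\<^sub>E UNIV B"
      by (auto simp: B_def PiE_def Pi_def extensional_def)
    then have "marginal (\<lambda>J. \<Prod>k\<in>UNIV. P$k$(J k)) i $ j
        = (\<Sum>J\<in>Pi\<^sub>E UNIV B. \<Prod>k\<in>UNIV. P$k$(J k))"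
      by (simp add: marginal_def)
    also have "\<dots> = (\<Prod>k\<in>UNIV. \<Sum>j'\<in>B k. P$k$j')"
      by (rule prod_sum_PiE[symmetric]) (auto simp: B_def)
    also have "\<dots> = (\<Prod>k\<in>UNIV. if k = i then P$i$j else 1)"
      using assms by (intro prod.cong) (auto simp: B_def prob_vec_def)
    finally show ?thesis by simp
  qed
  then show ?thesis by (simp add: vec_eq_iff)
qed

lemma cmin_le: "cmin C \<le> C J"
  unfolding cmin_def by (rule Min_le) auto

lemma SUP_eq_of_approx:
  fixes f :: "'a \<Rightarrow> real"
  assumes "\<And>y. y \<in> S \<Longrightarrow> f y \<le> T" "\<And>e. 0 < e \<Longrightarrow> \<exists>y\<in>S. T - e \<le> f y"
  shows "(SUP y\<in>S. f y) = T"
proof (rule cSup_eq_non_empty)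
  show "f ` S \<noteq> {}" using assms(2)[of 1] by auto
  fix b assume upper: "\<And>x. x \<in> f ` S \<Longrightarrow> x \<le> b"
  show "T \<le> b"
  proof (rule field_le_epsilon)
    fix e :: real assume "0 < e"
    then obtain y where "y \<in> S" "T - e \<le> f y" using assms(2) by blast
    then show "T \<le> b + e" using upper[of "f y"] by simp
  qed
qed (use assms(1) in auto)

context
  fixes C :: "('d::finite \<Rightarrow> 'n::finite) \<Rightarrow> real" and P :: "real^'n^'d"
  assumes prob: "\<forall>i. prob_vec (P$i)"
begin

lemma cmin_le_transport_cost:
  assumes "\<forall>J. 0 \<le> V J" "\<forall>i. marginal V i = P$i"
  shows "cmin C \<le> (\<Sum>J\<in>UNIV. C J * V J)"
proof -
  obtain i :: 'd where True by simp
  have "(\<Sum>J\<in>UNIV. V J) = 1"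
    using assms(2) prob by (simp add: sum_eq_sum_marginal[of V i] prob_vec_def)
  then have "cmin C = (\<Sum>J\<in>UNIV. cmin C * V J)" by (simp flip: sum_distrib_left)
  also have "\<dots> \<le> (\<Sum>J\<in>UNIV. C J * V J)"
    using assms(1) cmin_le by (intro sum_mono mult_right_mono) auto
  finally show ?thesis .
qed

lemma transport_feasible: "\<exists>V. (\<forall>J. 0 \<le> V J) \<and> (\<forall>i. marginal V i = P$i)"
  using prob marginal_product[OF prob]
  by (intro exI[of _ "\<lambda>J. \<Prod>k\<in>UNIV. P$k$(J k)"]) (auto simp: prob_vec_def prod_nonneg)

lemma tau_le_transport_cost:
  assumes "\<forall>J. 0 \<le> V J" "\<forall>i. marginal V i = P$i"
  shows "tau C P \<le> (\<Sum>J\<in>UNIV. C J * V J)"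
  unfolding tau_def using assms cmin_le_transport_cost
  by (intro cInf_lower bdd_belowI[of _ "cmin C"]) auto

lemma cmin_le_tau: "cmin C \<le> tau C P"
  unfolding tau_def using transport_feasible cmin_le_transport_cost
  by (intro cInf_greatest) auto

lemma objective_le_tau:
  assumes "\<forall>J. 0 \<le> Cx C y J"
  shows "objective P y \<le> tau C P"
  unfolding tau_def objective_eq_inner
proof (rule cInf_greatest)
  show "{\<Sum>J\<in>UNIV. C J * V J |V. (\<forall>J. 0 \<le> V J) \<and> (\<forall>i. marginal V i = P$i)} \<noteq> {}"
    using transport_feasible by auto
next
  fix t assume "t \<in> {\<Sum>J\<in>UNIV. C J * V J |V. (\<forall>J. 0 \<le> V J) \<and> (\<forall>i. marginal V i = P$i)}"
  then obtain V where "\<forall>J. 0 \<le> V J" "(\<Sum>J\<in>UNIV. V J *\<^sub>R point_marginals J) = P"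
    "t = (\<Sum>J\<in>UNIV. C J * V J)"
    by (auto simp: marginals_eq_iff)
  then show "P \<bullet> y \<le> t"
    using assms lp_weak_duality[of y point_marginals C V P] by (simp add: Cx_eq_inner)
qed

lemma tau_attained: "\<exists>y. (\<forall>J. 0 \<le> Cx C y J) \<and> objective P y = tau C P"
proof -
  obtain V0 where "\<forall>J. 0 \<le> V0 J" "(\<Sum>J\<in>UNIV. V0 J *\<^sub>R point_marginals J) = P"
    using transport_feasible by (auto simp: marginals_eq_iff)
  then obtain y where "\<forall>J. y \<bullet> point_marginals J \<le> C J" "tau C P \<le> P \<bullet> y"
    using lp_strong_duality[of V0 point_marginals P "tau C P" C] tau_le_transport_cost
    by (auto simp: marginals_eq_iff)
  then show ?thesis
    using objective_le_tau[of y] by (intro exI[of _ y]) (auto simp: Cx_eq_inner objective_eq_inner)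
qed

lemma balanced_strict_dual_approx:
  assumes "\<forall>J. 0 \<le> Cx C y J" "0 < e"
  shows "\<exists>z\<in>Dom C. objective P z = objective P y - e"
proof -
  define n where "n = real CARD('n)"
  define d where "d = real CARD('d)"
  define R where "R = (\<Sum>i\<in>UNIV. rowsum y i) / d"
  define s where "s i = (R - rowsum y i) / n" for i
  \<comment> \<open>Shifting row \<open>i\<close> by \<open>s i\<close> balances the row sums at no cost, as \<open>\<Sum>i. s i = 0\<close>;
    the uniform shift by \<open>-e/d\<close> makes the dual constraints strict.\<close>
  define z where "z = (\<chi> i j. y$i$j + s i - e / d)"
  have "d \<noteq> 0" "n \<noteq> 0" by (simp_all add: d_def n_def)
  have "(\<Sum>i\<in>UNIV. s i) = (d * R - (\<Sum>i\<in>UNIV. rowsum y i)) / n"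
    by (simp add: s_def d_def sum_subtractf flip: sum_divide_distrib)
  then have "(\<Sum>i\<in>UNIV. s i) = 0"
    using \<open>d \<noteq> 0\<close> by (simp add: R_def)
  then have "Cx C z J = Cx C y J + e" for J
    using \<open>d \<noteq> 0\<close> by (simp add: Cx_def z_def sum.distrib sum_subtractf d_def)
  then have "z \<in> Dhat C" using assms by (simp add: Dhat_def add_nonneg_pos)
  moreover have "rowsum z i = R - n * (e / d)" for i
    using \<open>n \<noteq> 0\<close> by (simp add: rowsum_def z_def sum.distrib sum_subtractf s_def n_def)
  moreover have "objective P z = objective P y + (\<Sum>i\<in>UNIV. s i) - e"
  proof -
    have "P$i \<bullet> z$i = P$i \<bullet> y$i + (s i - e / d) * (\<Sum>j\<in>UNIV. P$i$j)" for i
      by (simp add: z_def inner_vec_def distrib_left sum.distrib sum_distrib_left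
          add_diff_eq[symmetric] mult.commute)
    then have "P$i \<bullet> z$i = P$i \<bullet> y$i + (s i - e / d)" for i
      using prob by (simp add: prob_vec_def)
    then show ?thesis by (simp add: objective_def sum.distrib sum_subtractf d_def)
  qed
  ultimately show ?thesis
    using \<open>(\<Sum>i\<in>UNIV. s i) = 0\<close> by (auto simp: Dom_def)
qed

lemma tau_eq_SUP:
  "tau C P = (SUP y\<in>Dhat C. objective P y)" "tau C P = (SUP y\<in>Dom C. objective P y)"
proof -
  obtain y where y: "\<forall>J. 0 \<le> Cx C y J" "objective P y = tau C P"
    using tau_attained by blast
  have Dhat_le: "objective P z \<le> tau C P" if "z \<in> Dhat C" for z
    using that by (intro objective_le_tau) (auto simp: Dhat_def less_imp_le)
  have approx: "\<exists>z\<in>Dom C. tau C P - e \<le> objective P z" if "0 < e" for e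
    using balanced_strict_dual_approx[OF y(1) that] y(2) by force
  have "Dom C \<subseteq> Dhat C" by (auto simp: Dom_def)
  with Dhat_le approx show "tau C P = (SUP y\<in>Dhat C. objective P y)"
    by (intro SUP_eq_of_approx[symmetric]) blast+
  from \<open>Dom C \<subseteq> Dhat C\<close> Dhat_le approx show "tau C P = (SUP y\<in>Dom C. objective P y)"
    by (intro SUP_eq_of_approx[symmetric]) blast+
qed

end

section \<open>Bounds on dual feasible points\<close>

lemma sum_squares_le_of_interval:
  fixes f :: "'a \<Rightarrow> real"
  assumes "finite A" "\<forall>j\<in>A. lo \<le> f j \<and> f j \<le> lo + w" "sum f A = real (card A) * \<rho>"
  shows "(\<Sum>j\<in>A. (f j)\<^sup>2) \<le> real (card A) * (\<rho>\<^sup>2 + w\<^sup>2 / 4)"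
proof -
  have "0 \<le> (\<Sum>j\<in>A. (f j - lo) * (lo + w - f j))"
    using assms(2) by (intro sum_nonneg) auto
  also have "\<dots> = (\<Sum>j\<in>A. (2 * lo + w) * f j - (f j)\<^sup>2 - lo * (lo + w))"
    by (intro sum.cong) (auto simp: algebra_simps power2_eq_square)
  also have "\<dots> = (2 * lo + w) * sum f A - (\<Sum>j\<in>A. (f j)\<^sup>2) - real (card A) * (lo * (lo + w))"
    by (simp add: sum_subtractf sum_distrib_left)
  finally have "(\<Sum>j\<in>A. (f j)\<^sup>2) \<le> real (card A) * ((2 * lo + w) * \<rho> - lo * (lo + w))"
    using assms(3) by (simp add: algebra_simps)
  also have "\<dots> \<le> real (card A) * (\<rho>\<^sup>2 + w\<^sup>2 / 4)"
    using zero_le_power2[of "\<rho> - lo - w / 2"]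
    by (intro mult_left_mono) (auto simp: power2_eq_square algebra_simps)
  finally show ?thesis .
qed

lemma sum_le_prod_of_ge_2:
  fixes f :: "'a \<Rightarrow> real"
  assumes "finite I" "I \<noteq> {}" "\<forall>i\<in>I. 2 \<le> f i"
  shows "sum f I \<le> prod f I"
  using assms
proof (induction I rule: finite_ne_induct)
  case (insert x F)
  have "2 \<le> prod f F"
    using insert prod_mono[of F "\<lambda>_. 2" f] power_increasing[of 1 "card F" "2::real"]
    by (simp add: Suc_le_eq card_gt_0_iff)
  then have "f x + prod f F \<le> f x * prod f F"
    using insert.prems mult_mono[of 1 "f x - 1" 1 "prod f F - 1"] by (simp add: algebra_simps)
  with insert show ?case by simp
qed simp

lemma sum_prod_estimate:
  fixes u :: "'a \<Rightarrow> real"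
  assumes "finite I" "2 \<le> card I" "\<forall>i\<in>I. 2 \<le> u i"
  shows "(1 + 2 * sum u I)\<^sup>2 / real (card I) + (\<Sum>i\<in>I. (u i)\<^sup>2) < 4 * (prod u I)\<^sup>2"
proof -
  have "I \<noteq> {}" using assms(2) by auto
  define Q where "Q = prod u I"
  have "4 \<le> Q"
    using prod_mono[of I "\<lambda>_. 2" u] power_increasing[OF assms(2), of "2::real"] assms
    by (simp add: Q_def)
  have "sum u I \<le> Q"
    using sum_le_prod_of_ge_2 assms \<open>I \<noteq> {}\<close> by (simp add: Q_def)
  moreover have "0 \<le> sum u I"
    using assms(3) by (intro sum_nonneg) auto
  ultimately have "(1 + 2 * sum u I)\<^sup>2 / real (card I) \<le> (1 + 2 * Q)\<^sup>2 / 2"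
    using assms(2) by (intro frac_le power_mono) auto
  moreover have "(\<Sum>i\<in>I. (u i)\<^sup>2) \<le> Q\<^sup>2"
  proof -
    have "2 \<le> (u i)\<^sup>2" if "i \<in> I" for i
      using assms(3) that power_mono[of 2 "u i" 2] by fastforce
    then have "(\<Sum>i\<in>I. (u i)\<^sup>2) \<le> (\<Prod>i\<in>I. (u i)\<^sup>2)"
      using assms(1) \<open>I \<noteq> {}\<close> by (intro sum_le_prod_of_ge_2) auto
    then show ?thesis by (simp add: Q_def prod_power_distrib)
  qed
  moreover have "(1 + 2 * Q)\<^sup>2 / 2 + Q\<^sup>2 < 4 * Q\<^sup>2"
    using \<open>4 \<le> Q\<close> mult_mono[of 4 Q 2 "Q - 2"] by (simp add: power2_eq_square algebra_simps)
  ultimately show ?thesis unfolding Q_def by linarith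
qed

lemma norm_sq_le_of_row_bounds:
  fixes x :: "real^'n::finite^'d::finite"
  assumes bounds: "\<forall>i j. M i - s i \<le> x$i$j \<and> x$i$j \<le> M i"
    and "\<bar>\<Sum>i\<in>UNIV. M i\<bar> \<le> c" and rows: "\<forall>i i'. rowsum x i = rowsum x i'"
  shows "(norm x)\<^sup>2
    \<le> real CARD('n) * ((c + (\<Sum>i\<in>UNIV. s i))\<^sup>2 / real CARD('d) + (\<Sum>i\<in>UNIV. (s i)\<^sup>2) / 4)"
proof -
  define n where "n = real CARD('n)"
  define d where "d = real CARD('d)"
  obtain i0 :: 'd where True by simp
  \<comment> \<open>all rows share the mean \<open>\<rho>\<close>, which lies in every row's interval\<close>
  define \<rho> where "\<rho> = rowsum x i0 / n"
  have row_sum: "(\<Sum>j\<in>UNIV. x$i$j) = n * \<rho>" for i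
    using rows by (simp add: \<rho>_def n_def rowsum_def)
  have "M i - s i \<le> \<rho> \<and> \<rho> \<le> M i" for i
  proof -
    have "n * (M i - s i) \<le> n * \<rho> \<and> n * \<rho> \<le> n * M i"
      using bounds sum_mono[of UNIV "\<lambda>_. M i - s i" "\<lambda>j. x$i$j"]
        sum_mono[of UNIV "\<lambda>j. x$i$j" "\<lambda>_. M i"]
      by (simp add: row_sum n_def)
    then show ?thesis by (simp add: n_def)
  qed
  then have "\<bar>d * \<rho>\<bar> \<le> c + (\<Sum>i\<in>UNIV. s i)"
    using assms(2) sum_mono[of UNIV "\<lambda>i. M i - s i" "\<lambda>_. \<rho>"] sum_mono[of UNIV "\<lambda>_. \<rho>" M]
    by (simp add: d_def sum_subtractf)
  then have "(d * \<rho>)\<^sup>2 \<le> (c + (\<Sum>i\<in>UNIV. s i))\<^sup>2"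
    by (metis abs_ge_zero power2_abs power_mono)
  then have d\<rho>: "d * \<rho>\<^sup>2 \<le> (c + (\<Sum>i\<in>UNIV. s i))\<^sup>2 / d"
    by (simp add: d_def field_simps power2_eq_square)
  have "(norm x)\<^sup>2 = (\<Sum>i\<in>UNIV. \<Sum>j\<in>UNIV. (x$i$j)\<^sup>2)"
    by (simp add: norm_vec_def L2_set_def sum_nonneg)
  also have "\<dots> \<le> (\<Sum>i\<in>UNIV. n * (\<rho>\<^sup>2 + (s i)\<^sup>2 / 4))"
    using bounds row_sum
    by (intro sum_mono) (auto simp: n_def intro!: sum_squares_le_of_interval)
  also have "\<dots> = n * (d * \<rho>\<^sup>2 + (\<Sum>i\<in>UNIV. (s i)\<^sup>2) / 4)"
    by (simp add: d_def sum.distrib flip: sum_distrib_left sum_divide_distrib)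
  also have "\<dots> \<le> n * ((c + (\<Sum>i\<in>UNIV. s i))\<^sup>2 / d + (\<Sum>i\<in>UNIV. (s i)\<^sup>2) / 4)"
    using d\<rho> by (simp add: n_def)
  finally show ?thesis by (simp add: n_def d_def)
qed

lemma prob_vec_gap:
  assumes "prob_vec q" "\<forall>j. x$j \<le> M"
  shows "q$j * (M - x$j) \<le> M - q \<bullet> x"
proof -
  have "M - q \<bullet> x = M * (\<Sum>k\<in>UNIV. q$k) - (\<Sum>k\<in>UNIV. q$k * x$k)"
    using assms(1) by (simp add: prob_vec_def inner_vec_def)
  also have "\<dots> = (\<Sum>k\<in>UNIV. q$k * (M - x$k))"
    by (simp add: sum_distrib_left right_diff_distrib sum_subtractf mult.commute)
  finally have "M - q \<bullet> x = (\<Sum>k\<in>UNIV. q$k * (M - x$k))" .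
  moreover have "q$j * (M - x$j) \<le> (\<Sum>k\<in>UNIV. q$k * (M - x$k))"
    using assms by (intro member_le_sum[where f = "\<lambda>k. q$k * (M - x$k)"]) (auto simp: prob_vec_def)
  ultimately show ?thesis by simp
qed

lemma prob_vec_entry_ge:
  assumes "prob_vec q" "\<forall>j. 0 < q$j" "\<forall>j. x$j \<le> M" "M - q \<bullet> x \<le> g"
  shows "M - g / Min (range (\<lambda>j. q$j)) \<le> x$j"
proof -
  have "0 < Min (range (\<lambda>j. q$j))" using assms(2) by simp
  moreover have "(M - x$j) * Min (range (\<lambda>j. q$j)) \<le> q$j * (M - x$j)"
    using assms(3) by (subst mult.commute, intro mult_right_mono Min_le) auto
  ultimately have "M - x$j \<le> g / Min (range (\<lambda>j. q$j))"
    using prob_vec_gap[OF assms(1,3), of j] assms(4) by (simp add: pos_le_divide_eq)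
  then show ?thesis by simp
qed

lemma Min_prob_vec_le_half:
  assumes "prob_vec (q :: real^'n::finite)" "CARD('n) \<ge> 2"
  shows "2 * Min (range (\<lambda>j. q$j)) \<le> 1"
proof -
  have "0 \<le> Min (range (\<lambda>j. q$j))" using assms(1) by (simp add: prob_vec_def)
  then have "2 * Min (range (\<lambda>j. q$j)) \<le> real CARD('n) * Min (range (\<lambda>j. q$j))"
    using assms(2) by (intro mult_right_mono) auto
  also have "\<dots> \<le> 1"
    using sum_mono[of UNIV "\<lambda>_. Min (range (\<lambda>j. q$j))" "\<lambda>j. q$j"] assms(1)
    by (simp add: prob_vec_def)
  finally show ?thesis .
qed

lemma abs_le_cmax: "\<bar>C J\<bar> \<le> cmax C"
  unfolding cmax_def by (rule Max_ge) auto

lemma cmin_ge_neg_cmax: "- cmax C \<le> cmin C"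
proof -
  have "cmin C \<in> range C" unfolding cmin_def by (rule Min_in) auto
  then obtain J where "cmin C = C J" by blast
  then show ?thesis using abs_le_cmax[of C J] by linarith
qed

lemma cmax_pos:
  assumes "C \<noteq> (\<lambda>_. 0)"
  shows "0 < cmax C"
proof -
  obtain J where "C J \<noteq> 0" using assms by blast
  then show ?thesis using abs_le_cmax[of C J] by linarith
qed

lemma dual_feasible_row_bounds:
  fixes C :: "('d::finite \<Rightarrow> 'n::finite) \<Rightarrow> real" and P x :: "real^'n^'d"
  assumes prob: "\<forall>i. prob_vec (P$i)" and pos: "\<forall>i j. 0 < P$i$j"
    and feasible: "\<forall>J. 0 \<le> Cx C x J" and obj: "cmin C \<le> objective P x"
  shows "\<exists>M. (\<forall>i j. M i - 2 * cmax C / Min (range (\<lambda>j. P$i$j)) \<le> x$i$j \<and> x$i$j \<le> M i)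
    \<and> \<bar>\<Sum>i\<in>UNIV. M i\<bar> \<le> cmax C"
proof -
  define M where "M i = Max (range (\<lambda>j. x$i$j))" for i
  have x_le_M: "x$i$j \<le> M i" for i j unfolding M_def by (rule Max_ge) auto
  have "\<exists>j. x$i$j = M i" for i
  proof -
    have "M i \<in> range (\<lambda>j. x$i$j)" unfolding M_def by (rule Max_in) auto
    then show ?thesis by auto
  qed
  then obtain J where J: "x$i$(J i) = M i" for i by metis
  have "(\<Sum>i\<in>UNIV. M i) \<le> cmax C"
    using feasible[rule_format, of J] abs_le_cmax[of C J] by (simp add: Cx_def J)
  define gap where "gap i = M i - P$i \<bullet> x$i" for i
  have gap_nonneg: "0 \<le> gap i" for i
  proof -
    obtain j :: 'n where True by simp
    have "0 \<le> P$i$j * (M i - x$i$j)" using pos x_le_M by (simp add: less_imp_le)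
    then show ?thesis using prob_vec_gap[of "P$i" "x$i" "M i" j] prob x_le_M by (simp add: gap_def)
  qed
  have sum_gap: "(\<Sum>i\<in>UNIV. gap i) = (\<Sum>i\<in>UNIV. M i) - objective P x"
    by (simp add: gap_def objective_def sum_subtractf)
  have gap_le: "gap i \<le> 2 * cmax C" for i
  proof -
    have "gap i \<le> (\<Sum>i\<in>UNIV. gap i)" using gap_nonneg by (intro member_le_sum) auto
    then show ?thesis
      using sum_gap obj cmin_ge_neg_cmax[of C] \<open>(\<Sum>i\<in>UNIV. M i) \<le> cmax C\<close> by linarith
  qed
  have "0 \<le> (\<Sum>i\<in>UNIV. gap i)"
    using gap_nonneg by (intro sum_nonneg) auto
  have "- cmax C \<le> (\<Sum>i\<in>UNIV. M i)"
    using sum_gap obj cmin_ge_neg_cmax[of C] \<open>0 \<le> (\<Sum>i\<in>UNIV. gap i)\<close> by linarith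
  moreover have "M i - 2 * cmax C / Min (range (\<lambda>j. P$i$j)) \<le> x$i$j" for i j
    using prob pos x_le_M gap_le[of i] by (intro prob_vec_entry_ge) (auto simp: gap_def)
  ultimately show ?thesis
    using x_le_M \<open>(\<Sum>i\<in>UNIV. M i) \<le> cmax C\<close> by (intro exI[of _ M]) auto
qed

lemma pmin_bounds:
  fixes P :: "real^'n::finite^'d::finite"
  assumes "CARD('n) \<ge> 2" "CARD('d) \<ge> 2" "\<forall>i. prob_vec (P$i)" "\<forall>i j. 0 < P$i$j"
  shows "0 < pmin P" "pmin P \<le> 1 / 4"
proof -
  define m where "m i = Min (range (\<lambda>j. P$i$j))" for i
  have "0 < m i" for i using assms(4) by (simp add: m_def)
  moreover have "m i \<le> 1 / 2" for i
    using Min_prob_vec_le_half[of "P$i"] assms(1,3) by (simp add: m_def)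
  ultimately have "0 < (\<Prod>i\<in>UNIV. m i)" "(\<Prod>i\<in>UNIV. m i) \<le> (1 / 2) ^ CARD('d)"
    using prod_mono[of UNIV m "\<lambda>_. 1 / 2"] by (auto simp: less_imp_le prod_pos)
  moreover have "(1 / 2 :: real) ^ CARD('d) \<le> (1 / 2)\<^sup>2"
    using assms(2) by (intro power_decreasing) auto
  ultimately show "0 < pmin P" "pmin P \<le> 1 / 4"
    by (simp_all add: pmin_def m_def power2_eq_square)
qed

lemma norm_sq_lt_of_dual_feasible:
  fixes C :: "('d::finite \<Rightarrow> 'n::finite) \<Rightarrow> real" and P x :: "real^'n^'d"
  assumes n: "CARD('n) \<ge> 2" and d: "CARD('d) \<ge> 2" and C: "C \<noteq> (\<lambda>_. 0)"
    and prob: "\<forall>i. prob_vec (P$i)" and pos: "\<forall>i j. 0 < P$i$j"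
    and feasible: "\<forall>J. 0 \<le> Cx C x J" and obj: "cmin C \<le> objective P x"
    and rows: "\<forall>i i'. rowsum x i = rowsum x i'"
  shows "(norm x)\<^sup>2 < 4 * (cmax C)\<^sup>2 * real CARD('n) / (pmin P)\<^sup>2"
proof -
  define c where "c = cmax C"
  define u where "u i = 1 / Min (range (\<lambda>j. P$i$j))" for i
  obtain M where "\<forall>i j. M i - 2 * c * u i \<le> x$i$j \<and> x$i$j \<le> M i" "\<bar>\<Sum>i\<in>UNIV. M i\<bar> \<le> c"
    using dual_feasible_row_bounds[OF prob pos feasible obj] by (auto simp: c_def u_def)
  then have "(norm x)\<^sup>2 \<le> real CARD('n) *
      ((c + (\<Sum>i\<in>UNIV. 2 * c * u i))\<^sup>2 / real CARD('d) + (\<Sum>i\<in>UNIV. (2 * c * u i)\<^sup>2) / 4)"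
    using rows by (rule norm_sq_le_of_row_bounds)
  also have "\<dots> = real CARD('n) * c\<^sup>2 *
      ((1 + 2 * (\<Sum>i\<in>UNIV. u i))\<^sup>2 / real CARD('d) + (\<Sum>i\<in>UNIV. (u i)\<^sup>2))"
  proof -
    have e1: "c + (\<Sum>i\<in>UNIV. 2 * c * u i) = c * (1 + 2 * (\<Sum>i\<in>UNIV. u i))"
      by (subst sum_distrib_left[symmetric]) (simp add: algebra_simps)
    have e2: "(\<Sum>i\<in>UNIV. (2 * c * u i)\<^sup>2) = 4 * c\<^sup>2 * (\<Sum>i\<in>UNIV. (u i)\<^sup>2)"
      by (simp add: power_mult_distrib sum_distrib_left)
    show ?thesis unfolding e1 e2 by (simp only: power_mult_distrib) (simp add: field_simps)
  qed
  also have "\<dots> < real CARD('n) * c\<^sup>2 * (4 * (\<Prod>i\<in>UNIV. u i)\<^sup>2)"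
  proof (rule mult_strict_left_mono)
    have "2 \<le> u i" for i
      using Min_prob_vec_le_half[of "P$i"] prob n pos
      by (simp add: u_def le_divide_eq)
    then show "(1 + 2 * (\<Sum>i\<in>UNIV. u i))\<^sup>2 / real CARD('d) + (\<Sum>i\<in>UNIV. (u i)\<^sup>2)
        < 4 * (\<Prod>i\<in>UNIV. u i)\<^sup>2"
      using sum_prod_estimate[of UNIV u] d by simp
  qed (use cmax_pos[OF C] in \<open>simp add: c_def\<close>)
  also have "\<dots> = 4 * c\<^sup>2 * real CARD('n) / (pmin P)\<^sup>2"
    by (simp add: u_def pmin_def prod_dividef power_divide)
  finally show ?thesis by (simp add: c_def)
qed

lemma sum_norm_sq: "(\<Sum>i\<in>UNIV. (norm (x$i))\<^sup>2) = (norm x)\<^sup>2"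
  by (simp add: norm_vec_def L2_set_def sum_nonneg)

lemma sum_norm_diff_sq: "(\<Sum>i\<in>UNIV. (norm (x$i - y$i))\<^sup>2) = (norm (x - y))\<^sup>2"
  using sum_norm_sq[of "x - y"] by simp

lemma norm_lt_of_dual_feasible:
  fixes C :: "('d::finite \<Rightarrow> 'n::finite) \<Rightarrow> real" and P x :: "real^'n^'d"
  assumes "CARD('n) \<ge> 2" "CARD('d) \<ge> 2" "C \<noteq> (\<lambda>_. 0)"
    "\<forall>i. prob_vec (P$i)" "\<forall>i j. 0 < P$i$j"
    "\<forall>J. 0 \<le> Cx C x J" "cmin C \<le> objective P x" "\<forall>i i'. rowsum x i = rowsum x i'"
  shows "norm x < 2 * cmax C * sqrt (real CARD('n)) / pmin P"
proof (rule power2_less_imp_less)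
  show "(norm x)\<^sup>2 < (2 * cmax C * sqrt (real CARD('n)) / pmin P)\<^sup>2"
    using norm_sq_lt_of_dual_feasible[OF assms] by (simp add: power_divide power_mult_distrib)
  show "0 \<le> 2 * cmax C * sqrt (real CARD('n)) / pmin P"
    using cmax_pos[OF assms(3)] pmin_bounds(1)[OF assms(1,2,4,5)] by simp
qed

lemma x0_nth: "x0 C $ i $ j = (cmin C - 1) / real CARD('d)"
  for C :: "('d::finite \<Rightarrow> 'n::finite) \<Rightarrow> real"
  by (simp add: x0_def)

lemma Cx_x0: "Cx C (x0 C) J = C J - cmin C + 1"
  by (simp add: Cx_def x0_nth)

lemma norm_x0_sq: "(norm (x0 C))\<^sup>2 = real CARD('n) * (cmin C - 1)\<^sup>2 / real CARD('d)"
  for C :: "('d::finite \<Rightarrow> 'n::finite) \<Rightarrow> real"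
  by (simp add: norm_vec_def L2_set_def sum_nonneg x0_nth power_divide power2_eq_square)

lemma two_norm_x0_sq_le:
  fixes C :: "('d::finite \<Rightarrow> 'n::finite) \<Rightarrow> real"
  assumes "CARD('d) \<ge> 2"
  shows "2 * (norm (x0 C))\<^sup>2 \<le> real CARD('n) * (2 * (cmax C)\<^sup>2 + 2)"
proof -
  obtain J :: "'d \<Rightarrow> 'n" where True by simp
  have "\<bar>cmin C - 1\<bar> \<le> cmax C + 1"
    using cmin_ge_neg_cmax[of C] cmin_le[of C J] abs_le_cmax[of C J] by auto
  then have "(cmin C - 1)\<^sup>2 \<le> (cmax C + 1)\<^sup>2"
    by (metis abs_ge_zero power2_abs power_mono)
  also have "\<dots> \<le> 2 * (cmax C)\<^sup>2 + 2"
    using zero_le_power2[of "cmax C - 1"] by (simp add: power2_eq_square algebra_simps)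
  finally have "(cmin C - 1)\<^sup>2 \<le> 2 * (cmax C)\<^sup>2 + 2" .
  have "2 * (norm (x0 C))\<^sup>2 = real CARD('n) * (cmin C - 1)\<^sup>2 * (2 / real CARD('d))"
    by (simp add: norm_x0_sq)
  also have "\<dots> \<le> real CARD('n) * (cmin C - 1)\<^sup>2 * 1"
    using assms by (intro mult_left_mono) auto
  also have "\<dots> \<le> real CARD('n) * (2 * (cmax C)\<^sup>2 + 2)"
    using \<open>(cmin C - 1)\<^sup>2 \<le> 2 * (cmax C)\<^sup>2 + 2\<close> by simp
  finally show ?thesis .
qed

lemma dist_x0_sq_lt_rsq:
  fixes C :: "('d::finite \<Rightarrow> 'n::finite) \<Rightarrow> real" and P x :: "real^'n^'d"
  assumes n: "CARD('n) \<ge> 2" and d: "CARD('d) \<ge> 2" and C: "C \<noteq> (\<lambda>_. 0)"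
    and prob: "\<forall>i. prob_vec (P$i)" and pos: "\<forall>i j. 0 < P$i$j"
    and feasible: "\<forall>J. 0 \<le> Cx C x J" and obj: "cmin C \<le> objective P x"
    and rows: "\<forall>i i'. rowsum x i = rowsum x i'"
  shows "(norm (x - x0 C))\<^sup>2 < rsq C P"
proof -
  define c where "c = cmax C"
  define n where "n = real CARD('n)"
  define p where "p = pmin P"
  have "0 < p" "p \<le> 1 / 4" using pmin_bounds[OF n d prob pos] by (simp_all add: p_def)
  then have "16 \<le> 1 / p\<^sup>2"
    using power_mono[of p "1/4" 2] by (simp add: field_simps)
  have "(norm (x - x0 C))\<^sup>2 \<le> (norm x + norm (x0 C))\<^sup>2"
    using norm_triangle_ineq4[of x "x0 C"] by (simp add: power_mono)
  also have "\<dots> \<le> 2 * (norm x)\<^sup>2 + 2 * (norm (x0 C))\<^sup>2"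
    using zero_le_power2[of "norm x - norm (x0 C)"] by (simp add: power2_eq_square algebra_simps)
  also have "\<dots> < 8 * c\<^sup>2 * n / p\<^sup>2 + n * (2 * c\<^sup>2 + 2)"
    using norm_sq_lt_of_dual_feasible[OF assms] two_norm_x0_sq_le[OF d, of C]
    by (simp add: c_def n_def p_def)
  also have "\<dots> \<le> 8 * c\<^sup>2 * n / p\<^sup>2 + n * (c\<^sup>2 + 1) / p\<^sup>2"
  proof -
    have "2 * (n * (c\<^sup>2 + 1)) \<le> (1 / p\<^sup>2) * (n * (c\<^sup>2 + 1))"
      using \<open>16 \<le> 1 / p\<^sup>2\<close> by (intro mult_right_mono) (auto simp: n_def)
    then have "n * (2 * c\<^sup>2 + 2) \<le> n * (c\<^sup>2 + 1) / p\<^sup>2"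
      by (simp add: algebra_simps) (simp add: add_divide_distrib)
    then show ?thesis by simp
  qed
  also have "\<dots> = rsq C P"
    by (simp add: rsq_def c_def n_def p_def add_divide_distrib algebra_simps)
  finally show ?thesis .
qed

lemma rsq_gt_1:
  fixes C :: "('d::finite \<Rightarrow> 'n::finite) \<Rightarrow> real" and P :: "real^'n^'d"
  assumes "CARD('n) \<ge> 2" "CARD('d) \<ge> 2" "\<forall>i. prob_vec (P$i)" "\<forall>i j. 0 < P$i$j"
  shows "1 < rsq C P"
proof -
  have "0 < (pmin P)\<^sup>2" "(pmin P)\<^sup>2 < 1"
    using pmin_bounds[OF assms] power_strict_mono[of "pmin P" 1 2] by auto
  moreover have "1 \<le> (9 * (cmax C)\<^sup>2 + 1) * real CARD('n)"
    using assms(1) mult_mono[of 1 "9 * (cmax C)\<^sup>2 + 1" 1 "real CARD('n)"] by simp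
  ultimately show ?thesis by (simp add: rsq_def less_divide_eq)
qed

section \<open>The domain around \<open>x0\<close>\<close>

definition balanced :: "(real^'n::finite^'d::finite) set" where
  "balanced = {x. \<forall>i i'. rowsum x i = rowsum x i'}"

lemma rowsum_add_scaleR: "rowsum (u *\<^sub>R x + v *\<^sub>R y) i = u * rowsum x i + v * rowsum y i"
  by (simp add: rowsum_def sum.distrib sum_distrib_left)

lemma affine_balanced: "affine balanced"
  by (auto simp: affine_def balanced_def rowsum_add_scaleR) metis

lemma closed_balanced: "closed (balanced :: (real^'n::finite^'d::finite) set)"
  unfolding balanced_def Collect_all_eq rowsum_def
  by (intro closed_INT ballI closed_Collect_eq continuous_intros)

lemma Dom_eq: "Dom C = Dhat C \<inter> balanced"
  by (auto simp: Dom_def balanced_def)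

lemma x0_in_Dom: "x0 C \<in> Dom C"
  using cmin_le[of C]
  by (auto simp: Dom_def Dhat_def Cx_x0 rowsum_def x0_nth add.commute add_pos_nonneg)

lemma rel_frontier_dist_ge:
  fixes S :: "'a::euclidean_space set"
  assumes "ball a r \<inter> affine hull S \<subseteq> S" "y \<in> rel_frontier S"
  shows "r \<le> dist y a"
proof (rule ccontr)
  assume "\<not> r \<le> dist y a"
  have "ball y (r - dist y a) \<subseteq> ball a r"
  proof
    fix z assume "z \<in> ball y (r - dist y a)"
    then show "z \<in> ball a r"
      using dist_triangle[of a z y] dist_commute[of a y] by simp
  qed
  moreover have "y \<in> affine hull S"
    using assms(2) closure_affine_hull by (auto simp: rel_frontier_def)
  ultimately have "y \<in> rel_interior S"
    using assms(1) \<open>\<not> r \<le> dist y a\<close> unfolding mem_rel_interior_ball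
    by (intro conjI exI[of _ "r - dist y a"]) (auto simp: dist_commute)
  with assms(2) show False by (simp add: rel_frontier_def)
qed

lemma norm_point_marginals:
  "norm (point_marginals (J :: 'd::finite \<Rightarrow> 'n::finite)) = sqrt (real CARD('d))"
  by (simp add: norm_eq_sqrt_inner inner_point_marginals) (simp add: point_marginals_def)

lemma ball_x0_subset_D1:
  fixes C :: "('d::finite \<Rightarrow> 'n::finite) \<Rightarrow> real" and P :: "real^'n^'d"
  assumes "1 < rsq C P"
  shows "ball (x0 C) (1 / sqrt (real CARD('d))) \<inter> balanced \<subseteq> D1 C P"
proof
  fix z assume z: "z \<in> ball (x0 C) (1 / sqrt (real CARD('d))) \<inter> balanced"
  then have "norm (z - x0 C) * sqrt (real CARD('d)) < 1"
    by (simp add: dist_norm norm_minus_commute field_simps)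
  then have "0 < Cx C z J" for J
  proof -
    have "Cx C z J = Cx C (x0 C) J - (z - x0 C) \<bullet> point_marginals J"
      by (simp add: Cx_eq_inner inner_diff_left)
    moreover have "(z - x0 C) \<bullet> point_marginals J \<le> norm (z - x0 C) * sqrt (real CARD('d))"
      using norm_cauchy_schwarz[of "z - x0 C" "point_marginals J"]
      by (simp add: norm_point_marginals)
    ultimately show ?thesis
      using \<open>norm (z - x0 C) * sqrt (real CARD('d)) < 1\<close> Cx_x0[of C J] cmin_le[of C J] by linarith
  qed
  moreover have "(norm (z - x0 C))\<^sup>2 < rsq C P"
  proof -
    have "1 \<le> sqrt (real CARD('d))" by simp
    then have "norm (z - x0 C) \<le> norm (z - x0 C) * sqrt (real CARD('d))"
      using mult_left_mono[of 1 _ "norm (z - x0 C)"] by simp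
    then have "norm (z - x0 C) < 1"
      using \<open>norm (z - x0 C) * sqrt (real CARD('d)) < 1\<close> by linarith
    then have "(norm (z - x0 C))\<^sup>2 < 1" by (simp add: abs_square_less_1)
    then show ?thesis using assms by linarith
  qed
  ultimately show "z \<in> D1 C P"
    using z by (simp add: D1_def Dom_eq Dhat_def sum_norm_diff_sq)
qed

lemma D1_dist_x0_ge:
  fixes C :: "('d::finite \<Rightarrow> 'n::finite) \<Rightarrow> real" and P :: "real^'n^'d"
  assumes "1 < rsq C P" "y \<in> rel_frontier (D1 C P)"
  shows "1 / sqrt (real CARD('d)) \<le> dist y (x0 C)"
proof (rule rel_frontier_dist_ge[OF _ assms(2)])
  have "affine hull (D1 C P) \<subseteq> balanced"
    using affine_balanced by (intro hull_minimal) (auto simp: D1_def Dom_eq)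
  then show "ball (x0 C) (1 / sqrt (real CARD('d))) \<inter> affine hull (D1 C P) \<subseteq> D1 C P"
    using ball_x0_subset_D1[OF assms(1)] by blast
qed

section \<open>Third-order differentiability\<close>

lemma blinfun_eq_sum_Basis:
  fixes T :: "'a::euclidean_space \<Rightarrow>\<^sub>L 'w::real_normed_vector"
  shows "T = (\<Sum>b\<in>Basis. blinfun_scaleR_left (blinfun_apply T b) o\<^sub>L blinfun_inner_left b)"
proof (rule blinfun_eqI)
  fix h
  have "blinfun_apply T h = blinfun_apply T (\<Sum>b\<in>Basis. (h \<bullet> b) *\<^sub>R b)"
    by (simp add: euclidean_representation)
  then show "blinfun_apply T h = blinfun_apply
      (\<Sum>b\<in>Basis. blinfun_scaleR_left (blinfun_apply T b) o\<^sub>L blinfun_inner_left b) h"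
    by (simp add: blinfun.sum_left blinfun.sum_right blinfun.scaleR_right)
qed

lemma bounded_linear_blinfun_basis_term:
  "bounded_linear (\<lambda>w. blinfun_scaleR_left w o\<^sub>L (blinfun_inner_left b :: 'a::real_inner \<Rightarrow>\<^sub>L real))"
  by (rule bounded_linear_compose[OF
        bounded_bilinear.bounded_linear_left[OF bounded_bilinear_blinfun_compose]
        bounded_linear_blinfun_scaleR_left])

lemma has_derivative_blinfunI:
  fixes F :: "'x::real_normed_vector \<Rightarrow> ('a::euclidean_space \<Rightarrow>\<^sub>L 'w::real_normed_vector)"
  assumes "bounded_linear G"
    and "\<And>l. ((\<lambda>y. blinfun_apply (F y) l) has_derivative (\<lambda>h. blinfun_apply (G h) l)) (at x)"
  shows "(F has_derivative G) (at x)"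
proof -
  have "((\<lambda>y. \<Sum>b\<in>Basis. blinfun_scaleR_left (blinfun_apply (F y) b) o\<^sub>L blinfun_inner_left b)
      has_derivative
        (\<lambda>h. \<Sum>b\<in>Basis. blinfun_scaleR_left (blinfun_apply (G h) b) o\<^sub>L blinfun_inner_left b))
      (at x)"
    by (intro has_derivative_sum bounded_linear.has_derivative[OF bounded_linear_blinfun_basis_term]
        assms(2))
  then show ?thesis by (simp flip: blinfun_eq_sum_Basis)
qed

lemma continuous_on_blinfunI:
  fixes F :: "'x::topological_space \<Rightarrow> ('a::euclidean_space \<Rightarrow>\<^sub>L 'w::real_normed_vector)"
  assumes "\<And>l. continuous_on U (\<lambda>x. blinfun_apply (F x) l)"
  shows "continuous_on U F"
proof -
  have "continuous_on U
      (\<lambda>x. \<Sum>b\<in>Basis. blinfun_scaleR_left (blinfun_apply (F x) b) o\<^sub>L blinfun_inner_left b)"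
    by (intro continuous_on_sum bounded_linear.continuous_on[OF bounded_linear_blinfun_basis_term]
        assms)
  then show ?thesis by (simp flip: blinfun_eq_sum_Basis)
qed

lemma bounded_linear_Blinfun_family:
  fixes g :: "'a::euclidean_space \<Rightarrow> 'b::euclidean_space \<Rightarrow> 'w::real_normed_vector"
  assumes "\<And>h. linear (g h)" "\<And>l. linear (\<lambda>h. g h l)"
  shows "bounded_linear (\<lambda>h. Blinfun (g h))"
proof -
  have apply_eq: "blinfun_apply (Blinfun (g h)) = g h" for h
    using assms(1) by (simp add: bounded_linear_Blinfun_apply linear_conv_bounded_linear)
  have "linear (\<lambda>h. Blinfun (g h))"
    by (rule linearI; rule blinfun_eqI)
      (simp_all add: apply_eq plus_blinfun.rep_eq scaleR_blinfun.rep_eq linear_add[OF assms(2)]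
        linear_scale[OF assms(2)])
  then show ?thesis by (simp add: linear_conv_bounded_linear)
qed

lemma higher_deriv_eqI:
  fixes \<phi> \<phi>' \<phi>'' \<phi>''' :: "real \<Rightarrow> real"
  assumes "open N" "t \<in> N"
    and "\<And>s. s \<in> N \<Longrightarrow> (\<phi> has_real_derivative \<phi>' s) (at s)"
    and "\<And>s. s \<in> N \<Longrightarrow> (\<phi>' has_real_derivative \<phi>'' s) (at s)"
    and "\<And>s. s \<in> N \<Longrightarrow> (\<phi>'' has_real_derivative \<phi>''' s) (at s)"
  shows "(deriv ^^ 1) \<phi> t = \<phi>' t" "(deriv ^^ 2) \<phi> t = \<phi>'' t" "(deriv ^^ 3) \<phi> t = \<phi>''' t"
proof -
  have d1: "deriv \<phi> s = \<phi>' s" if "s \<in> N" for s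
    using assms(3)[OF that] by (rule DERIV_imp_deriv)
  have d2: "deriv (deriv \<phi>) s = \<phi>'' s" if "s \<in> N" for s
  proof -
    have "deriv (deriv \<phi>) s = deriv \<phi>' s"
      using eventually_nhds_in_open[OF assms(1) that] d1
      by (intro deriv_cong_ev) (auto elim: eventually_mono)
    then show ?thesis using assms(4)[OF that] by (simp add: DERIV_imp_deriv)
  qed
  have "deriv (deriv (deriv \<phi>)) t = deriv \<phi>'' t"
    using eventually_nhds_in_open[OF assms(1,2)] d2
    by (intro deriv_cong_ev) (auto elim: eventually_mono)
  then show "(deriv ^^ 3) \<phi> t = \<phi>''' t"
    using assms(5)[OF assms(2)] by (simp add: numeral_3_eq_3 DERIV_imp_deriv)
  show "(deriv ^^ 1) \<phi> t = \<phi>' t" "(deriv ^^ 2) \<phi> t = \<phi>'' t"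
    using d1 d2 assms(2) by (simp_all add: numeral_2_eq_2)
qed

lemma has_real_derivative_along_line:
  assumes "(g has_derivative G) (at (x + t *\<^sub>R u))"
  shows "((\<lambda>s. g (x + s *\<^sub>R u)) has_real_derivative G u) (at t)"
proof -
  have "((\<lambda>s. g (x + s *\<^sub>R u)) has_derivative (\<lambda>s. G (s *\<^sub>R u))) (at t)"
    using assms by (auto intro!: derivative_eq_intros has_derivative_compose[of _ _ t _ g])
  moreover have "G (s *\<^sub>R u) = s * G u" for s
    using has_derivative_bounded_linear[OF assms] by (simp add: linear_simps)
  ultimately show ?thesis by (simp add: has_field_derivative_def mult_commute_abs)
qed

locale C3_forms =
  fixes U :: "'a::euclidean_space set" and f :: "'a \<Rightarrow> real"
    and f' :: "'a \<Rightarrow> 'a \<Rightarrow> real" and f'' :: "'a \<Rightarrow> 'a \<Rightarrow> 'a \<Rightarrow> real"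
    and f''' :: "'a \<Rightarrow> 'a \<Rightarrow> 'a \<Rightarrow> 'a \<Rightarrow> real"
  assumes open_U: "open U"
    and linear_f': "linear (f' x)"
    and linear_f''_1: "linear (\<lambda>h. f'' x h l)" and linear_f''_2: "linear (f'' x h)"
    and linear_f'''_1: "linear (\<lambda>h. f''' x h l m)" and linear_f'''_2: "linear (\<lambda>l. f''' x h l m)"
    and linear_f'''_3: "linear (f''' x h l)"
    and has_derivative_f: "x \<in> U \<Longrightarrow> (f has_derivative f' x) (at x)"
    and has_derivative_f': "x \<in> U \<Longrightarrow> ((\<lambda>y. f' y l) has_derivative (\<lambda>h. f'' x h l)) (at x)"
    and has_derivative_f'': "x \<in> U \<Longrightarrow> ((\<lambda>y. f'' y l m) has_derivative (\<lambda>h. f''' x h l m)) (at x)"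
    and continuous_on_f''': "continuous_on U (\<lambda>x. f''' x h l m)"
begin

lemma C3_on:
  assumes "S \<subseteq> U"
  shows "C3_on S f"
proof -
  have B: "bounded_linear (f' x)" "bounded_linear (f'' x h)" "bounded_linear (f''' x h l)"
    for x h l
    using linear_f' linear_f''_2 linear_f'''_3 by (simp_all add: linear_conv_bounded_linear)
  have B': "bounded_linear (\<lambda>h. Blinfun (f'' x h))" "bounded_linear (\<lambda>l. Blinfun (f''' x h l))"
    "bounded_linear (\<lambda>h. Blinfun (f''' x h l))" for x h l
    by (intro bounded_linear_Blinfun_family linear_f''_1 linear_f''_2 linear_f'''_1 linear_f'''_2
        linear_f'''_3)+
  have B3: "bounded_linear (\<lambda>h. Blinfun (\<lambda>l. Blinfun (f''' x h l)))" for x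
    using B' by (intro bounded_linear_Blinfun_family) (auto simp: bounded_linear.linear)
  define f1 where "f1 x = Blinfun (f' x)" for x
  define f2 where "f2 x = Blinfun (\<lambda>h. Blinfun (f'' x h))" for x
  define f3 where "f3 x = Blinfun (\<lambda>h. Blinfun (\<lambda>l. Blinfun (f''' x h l)))" for x
  have f1: "blinfun_apply (f1 x) = f' x"
    and f2: "blinfun_apply (f2 x) h = Blinfun (f'' x h)"
    and f3: "blinfun_apply (f3 x) h = Blinfun (\<lambda>l. Blinfun (f''' x h l))" for x h
    by (simp_all add: f1_def f2_def f3_def bounded_linear_Blinfun_apply B B' B3)
  have "(f has_derivative blinfun_apply (f1 x)) (at x)
      \<and> (f1 has_derivative blinfun_apply (f2 x)) (at x)
      \<and> (f2 has_derivative blinfun_apply (f3 x)) (at x)" if "x \<in> U" for x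
  proof (intro conjI)
    show "(f has_derivative blinfun_apply (f1 x)) (at x)"
      using has_derivative_f[OF that] by (simp add: f1)
    show "(f1 has_derivative blinfun_apply (f2 x)) (at x)"
      using has_derivative_f'[OF that]
      by (intro has_derivative_blinfunI)
        (simp_all add: f1 f2 bounded_linear_Blinfun_apply B B' blinfun.bounded_linear_right)
    show "(f2 has_derivative blinfun_apply (f3 x)) (at x)"
      using has_derivative_f''[OF that]
      by (intro has_derivative_blinfunI)
        (simp_all add: f2 f3 bounded_linear_Blinfun_apply B B' blinfun.bounded_linear_right
          has_derivative_blinfunI)
  qed
  moreover have "continuous_on S f3"
    using continuous_on_subset[OF continuous_on_f''' assms]
    by (intro continuous_on_blinfunI) (simp add: f3 bounded_linear_Blinfun_apply B B')
  ultimately show ?thesis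
    unfolding C3_on_def using assms
    by (intro exI[of _ f1] exI[of _ f2] exI[of _ f3]) (blast intro: has_derivative_at_withinI)
qed

lemma dderiv_eq:
  assumes "x \<in> U"
  shows "dderiv 1 f x u = f' x u" "dderiv 2 f x u = f'' x u u" "dderiv 3 f x u = f''' x u u u"
proof -
  define N where "N = (\<lambda>s. x + s *\<^sub>R u) -` U"
  have "open N" unfolding N_def by (intro continuous_open_vimage open_U continuous_intros)
  moreover have "0 \<in> N" using assms by (simp add: N_def)
  moreover have "((\<lambda>t. f (x + t *\<^sub>R u)) has_real_derivative f' (x + s *\<^sub>R u) u) (at s)"
    "((\<lambda>t. f' (x + t *\<^sub>R u) u) has_real_derivative f'' (x + s *\<^sub>R u) u u) (at s)"
    "((\<lambda>t. f'' (x + t *\<^sub>R u) u u) has_real_derivative f''' (x + s *\<^sub>R u) u u u) (at s)"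
    if "s \<in> N" for s
    using that unfolding N_def
    by (auto intro!: has_real_derivative_along_line[OF has_derivative_f]
        has_real_derivative_along_line[OF has_derivative_f']
        has_real_derivative_along_line[OF has_derivative_f''])
  ultimately show "dderiv 1 f x u = f' x u" "dderiv 2 f x u = f'' x u u"
    "dderiv 3 f x u = f''' x u u u"
    unfolding dderiv_def
    using higher_deriv_eqI[of N 0 "\<lambda>t. f (x + t *\<^sub>R u)" "\<lambda>s. f' (x + s *\<^sub>R u) u"
        "\<lambda>s. f'' (x + s *\<^sub>R u) u u" "\<lambda>s. f''' (x + s *\<^sub>R u) u u u"]
    by simp_all
qed

lemma add_const: "C3_forms U (\<lambda>x. f x + c) f' f'' f'''"
  by (rule C3_forms.intro)
    (auto intro: has_derivative_f open_U linear_f' linear_f''_1 linear_f''_2 linear_f'''_1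
      linear_f'''_2 linear_f'''_3 has_derivative_f' has_derivative_f'' continuous_on_f'''
      has_derivative_add_const)

end

section \<open>Logarithmic barriers of concave quadratics\<close>

lemma convex_on_sum_fun:
  assumes "finite K" "convex S" "\<And>k. k \<in> K \<Longrightarrow> convex_on S (f k)"
  shows "convex_on S (\<lambda>x. \<Sum>k\<in>K. f k x)"
  using assms(1,3)
  by (induction K rule: finite_induct) (auto simp: convex_on_const assms(2) convex_on_add)

lemma abs_cubic_le:
  fixes A B :: real
  assumes "0 \<le> B"
  shows "\<bar>2 * A ^ 3 + 3 * A * B\<bar> \<le> 2 * (A\<^sup>2 + B) powr (3 / 2)"
proof -
  define s where "s = sqrt (A\<^sup>2 + B)"
  have "0 \<le> A\<^sup>2 + B" using assms by simp
  then have "0 \<le> s" "s\<^sup>2 = A\<^sup>2 + B" by (simp_all add: s_def)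
  then have "\<bar>A\<bar> \<le> s"
    using assms abs_le_square_iff[of A s] by simp
  have "2 * A ^ 3 + 3 * A * B = A * (3 * s\<^sup>2 - \<bar>A\<bar>\<^sup>2)"
    using \<open>s\<^sup>2 = A\<^sup>2 + B\<close> by (simp add: power2_eq_square power3_eq_cube algebra_simps)
  moreover have "0 \<le> 3 * s\<^sup>2 - \<bar>A\<bar>\<^sup>2"
    using \<open>s\<^sup>2 = A\<^sup>2 + B\<close> assms by simp
  ultimately have "\<bar>2 * A ^ 3 + 3 * A * B\<bar> = \<bar>A\<bar> * (3 * s\<^sup>2 - \<bar>A\<bar>\<^sup>2)"
    by (simp add: abs_mult)
  also have "\<dots> \<le> 2 * s ^ 3"
  proof -
    have "2 * s ^ 3 - \<bar>A\<bar> * (3 * s\<^sup>2 - \<bar>A\<bar>\<^sup>2) = (s - \<bar>A\<bar>)\<^sup>2 * (2 * s + \<bar>A\<bar>)"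
      by (simp add: power2_eq_square power3_eq_cube algebra_simps)
    moreover have "0 \<le> (s - \<bar>A\<bar>)\<^sup>2 * (2 * s + \<bar>A\<bar>)"
      using \<open>0 \<le> s\<close> by simp
    ultimately show ?thesis by linarith
  qed
  also have "s ^ 3 = (A\<^sup>2 + B) powr (3 / 2)"
  proof -
    have "(A\<^sup>2 + B) powr (3 / 2) = (A\<^sup>2 + B) * (A\<^sup>2 + B) powr (1 / 2)"
      using powr_mult_base[OF \<open>0 \<le> A\<^sup>2 + B\<close>, of "1 / 2"] by simp
    also have "\<dots> = s\<^sup>2 * s"
      using \<open>0 \<le> A\<^sup>2 + B\<close> \<open>s\<^sup>2 = A\<^sup>2 + B\<close> by (simp add: s_def powr_half_sqrt)
    finally show ?thesis by (simp add: power2_eq_square power3_eq_cube)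
  qed
  finally show ?thesis by simp
qed

lemma abs_sum_cubic_le:
  fixes A B :: "'k \<Rightarrow> real"
  assumes "finite K" "\<And>k. k \<in> K \<Longrightarrow> 0 \<le> B k"
  shows "\<bar>\<Sum>k\<in>K. 2 * A k ^ 3 + 3 * A k * B k\<bar> \<le> 2 * (\<Sum>k\<in>K. (A k)\<^sup>2 + B k) powr (3 / 2)"
proof -
  define X where "X k = (A k)\<^sup>2 + B k" for k
  define S where "S = (\<Sum>k\<in>K. X k)"
  have X0: "0 \<le> X k" if "k \<in> K" for k
    using assms that by (simp add: X_def)
  have X: "0 \<le> X k" "X k \<le> S" if "k \<in> K" for k
    using X0 that assms(1) unfolding S_def by (auto intro: member_le_sum)
  then have "0 \<le> S" unfolding S_def by (simp add: sum_nonneg)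
  have "\<bar>\<Sum>k\<in>K. 2 * A k ^ 3 + 3 * A k * B k\<bar> \<le> (\<Sum>k\<in>K. 2 * X k powr (3 / 2))"
    using assms(2) by (intro order.trans[OF sum_abs] sum_mono) (simp add: X_def abs_cubic_le)
  also have "\<dots> = (\<Sum>k\<in>K. 2 * (X k * X k powr (1 / 2)))"
    using X(1) by (intro sum.cong) (simp_all add: powr_mult_base)
  also have "\<dots> \<le> (\<Sum>k\<in>K. 2 * (X k * S powr (1 / 2)))"
    using X by (intro sum_mono mult_left_mono powr_mono2) auto
  also have "\<dots> = 2 * (S * S powr (1 / 2))"
    by (simp add: S_def sum_distrib_left sum_distrib_right)
  also have "\<dots> = 2 * S powr (3 / 2)"
    using powr_mult_base[OF \<open>0 \<le> S\<close>, of "1 / 2"] by simp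
  finally show ?thesis by (simp add: S_def X_def)
qed

locale isotropic_concave_quadratics =
  fixes K :: "'k set" and \<alpha> :: "'k \<Rightarrow> real" and \<beta> :: "'k \<Rightarrow> 'a::euclidean_space"
    and \<gamma> :: "'k \<Rightarrow> real"
  assumes finite_K: "finite K" and concave: "\<And>k. k \<in> K \<Longrightarrow> \<gamma> k \<le> 0"
begin

text \<open>\<open>grad k x\<close> is the gradient of \<open>ln (q k x)\<close>, and the Hessian of \<open>- ln (q k x)\<close> is
  \<open>curv k x I + grad k x grad k x\<^sup>T\<close>; so \<open>logb'\<close>, \<open>logb''\<close> and \<open>logb'''\<close> are the first three
  derivatives of \<open>logb\<close>, written as multilinear forms.\<close>

definition q :: "'k \<Rightarrow> 'a \<Rightarrow> real" where
  "q k x = \<alpha> k + \<beta> k \<bullet> x + \<gamma> k * (x \<bullet> x)"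

definition grad :: "'k \<Rightarrow> 'a \<Rightarrow> 'a" where
  "grad k x = (1 / q k x) *\<^sub>R (\<beta> k + (2 * \<gamma> k) *\<^sub>R x)"

definition curv :: "'k \<Rightarrow> 'a \<Rightarrow> real" where
  "curv k x = - 2 * \<gamma> k / q k x"

definition U :: "'a set" where
  "U = {x. \<forall>k\<in>K. 0 < q k x}"

definition logb :: "'a \<Rightarrow> real" where
  "logb x = - (\<Sum>k\<in>K. ln (q k x))"

definition logb' :: "'a \<Rightarrow> 'a \<Rightarrow> real" where
  "logb' x h = - (\<Sum>k\<in>K. grad k x \<bullet> h)"

definition logb'' :: "'a \<Rightarrow> 'a \<Rightarrow> 'a \<Rightarrow> real" where
  "logb'' x h l = (\<Sum>k\<in>K. curv k x * (h \<bullet> l) + (grad k x \<bullet> h) * (grad k x \<bullet> l))"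

definition logb''' :: "'a \<Rightarrow> 'a \<Rightarrow> 'a \<Rightarrow> 'a \<Rightarrow> real" where
  "logb''' x h l m = - (\<Sum>k\<in>K.
     curv k x * ((grad k x \<bullet> h) * (l \<bullet> m) + (grad k x \<bullet> l) * (h \<bullet> m) + (grad k x \<bullet> m) * (h \<bullet> l))
     + 2 * (grad k x \<bullet> h) * (grad k x \<bullet> l) * (grad k x \<bullet> m))"

lemma has_derivative_q: "(q k has_derivative (\<lambda>h. (\<beta> k + (2 * \<gamma> k) *\<^sub>R x) \<bullet> h)) (at x)"
  unfolding q_def by (auto intro!: derivative_eq_intros simp: inner_commute algebra_simps)

lemma has_derivative_ln_q:
  assumes "0 < q k x"
  shows "((\<lambda>y. ln (q k y)) has_derivative (\<lambda>h. grad k x \<bullet> h)) (at x)"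
  using DERIV_compose_FDERIV[OF DERIV_ln[OF assms] has_derivative_q]
  by (simp add: grad_def divide_inverse mult.commute)

lemma has_derivative_grad_inner:
  assumes "q k x \<noteq> 0"
  shows "((\<lambda>y. grad k y \<bullet> l) has_derivative
    (\<lambda>h. - curv k x * (h \<bullet> l) - (grad k x \<bullet> h) * (grad k x \<bullet> l))) (at x)"
proof -
  have "(\<lambda>y. grad k y \<bullet> l) = (\<lambda>y. (\<beta> k \<bullet> l + 2 * \<gamma> k * (y \<bullet> l)) / q k y)"
    by (simp add: grad_def inner_add_left divide_inverse mult.commute)
  moreover have "((\<lambda>y. (\<beta> k \<bullet> l + 2 * \<gamma> k * (y \<bullet> l)) / q k y) has_derivative
    (\<lambda>h. (2 * \<gamma> k * (h \<bullet> l) * q k x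
      - (\<beta> k \<bullet> l + 2 * \<gamma> k * (x \<bullet> l)) * ((\<beta> k + (2 * \<gamma> k) *\<^sub>R x) \<bullet> h)) / (q k x * q k x)))
    (at x)"
    using assms by (auto intro!: derivative_eq_intros has_derivative_q)
  moreover have "(2 * \<gamma> k * (h \<bullet> l) * q k x
      - (\<beta> k \<bullet> l + 2 * \<gamma> k * (x \<bullet> l)) * ((\<beta> k + (2 * \<gamma> k) *\<^sub>R x) \<bullet> h)) / (q k x * q k x)
    = - curv k x * (h \<bullet> l) - (grad k x \<bullet> h) * (grad k x \<bullet> l)" for h
    using assms by (simp add: grad_def curv_def inner_add_left field_simps)
  ultimately show ?thesis by simp
qed

lemma has_derivative_curv:
  assumes "q k x \<noteq> 0"
  shows "(curv k has_derivative (\<lambda>h. - curv k x * (grad k x \<bullet> h))) (at x)"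
proof -
  have "((\<lambda>y. - 2 * \<gamma> k / q k y) has_derivative
      (\<lambda>h. - (- 2 * \<gamma> k * ((\<beta> k + (2 * \<gamma> k) *\<^sub>R x) \<bullet> h)) / (q k x * q k x))) (at x)"
    using assms by (auto intro!: derivative_eq_intros has_derivative_q)
  moreover have "- (- 2 * \<gamma> k * ((\<beta> k + (2 * \<gamma> k) *\<^sub>R x) \<bullet> h)) / (q k x * q k x)
      = - curv k x * (grad k x \<bullet> h)" for h
    using assms by (simp add: grad_def curv_def inner_add_left field_simps)
  ultimately show ?thesis by (simp add: curv_def[abs_def])
qed

lemma open_U: "open U"
proof -
  have "U = (\<Inter>k\<in>K. {x. 0 < q k x})" by (auto simp: U_def)
  also have "open \<dots>"
    unfolding q_def by (intro open_INT finite_K ballI open_Collect_less continuous_intros)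
  finally show ?thesis .
qed

lemma continuous_on_grad_curv:
  "continuous_on U (grad k)" "continuous_on U (curv k)" if "k \<in> K"
proof -
  have "\<forall>x\<in>U. q k x \<noteq> 0" using that by (auto simp: U_def)
  then show "continuous_on U (grad k)" "continuous_on U (curv k)"
    unfolding grad_def curv_def q_def by (auto intro!: continuous_intros)
qed

sublocale C3_forms U logb logb' logb'' logb'''
proof (rule C3_forms.intro)
  show "open U" by (rule open_U)
  note defs = linear_conv_bounded_linear logb'_def[abs_def] logb''_def[abs_def] logb'''_def[abs_def]
  show "linear (logb' x)" for x
    unfolding defs by (intro bounded_linear_intros bounded_linear_minus)
  show "linear (\<lambda>h. logb'' x h l)" for x l
    unfolding defs by (intro bounded_linear_intros)
  show "linear (logb'' x h)" for x h
    unfolding defs by (intro bounded_linear_intros)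
  show "linear (\<lambda>h. logb''' x h l m)" for x l m
    unfolding defs by (intro bounded_linear_intros bounded_linear_minus)
  show "linear (\<lambda>l. logb''' x h l m)" for x h m
    unfolding defs by (intro bounded_linear_intros bounded_linear_minus)
  show "linear (logb''' x h l)" for x h l
    unfolding defs by (intro bounded_linear_intros bounded_linear_minus)
  have q: "0 < q k x" if "x \<in> U" "k \<in> K" for x k using that by (auto simp: U_def)
  show "(logb has_derivative logb' x) (at x)" if "x \<in> U" for x
    unfolding logb_def logb'_def[abs_def]
    by (intro has_derivative_minus has_derivative_sum has_derivative_ln_q q that)
  show "((\<lambda>y. logb' y l) has_derivative (\<lambda>h. logb'' x h l)) (at x)" if "x \<in> U" for x l
  proof -
    have "((\<lambda>y. - (\<Sum>k\<in>K. grad k y \<bullet> l)) has_derivative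
        (\<lambda>h. - (\<Sum>k\<in>K. - curv k x * (h \<bullet> l) - (grad k x \<bullet> h) * (grad k x \<bullet> l)))) (at x)"
      using q[OF that] by (intro has_derivative_minus has_derivative_sum has_derivative_grad_inner)
        (simp add: less_imp_neq[symmetric])
    then show ?thesis
      unfolding logb'_def
      by (rule has_derivative_eq_rhs) (simp add: fun_eq_iff logb''_def add.commute flip: sum_negf)
  qed
  show "((\<lambda>y. logb'' y l m) has_derivative (\<lambda>h. logb''' x h l m)) (at x)" if "x \<in> U" for x l m
  proof -
    let ?D = "\<lambda>k h. - curv k x * (grad k x \<bullet> h)"
    let ?E = "\<lambda>k h l. - curv k x * (h \<bullet> l) - (grad k x \<bullet> h) * (grad k x \<bullet> l)"
    have "((\<lambda>y. \<Sum>k\<in>K. curv k y * (l \<bullet> m) + (grad k y \<bullet> l) * (grad k y \<bullet> m)) has_derivative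
        (\<lambda>h. \<Sum>k\<in>K. ?D k h * (l \<bullet> m)
          + ((grad k x \<bullet> l) * ?E k h m + ?E k h l * (grad k x \<bullet> m)))) (at x)"
      using q[OF that]
      by (intro has_derivative_sum has_derivative_add has_derivative_mult_left has_derivative_mult
          has_derivative_grad_inner has_derivative_curv) (simp_all add: less_imp_neq[symmetric])
    then show ?thesis
      unfolding logb''_def
      by (rule has_derivative_eq_rhs)
        (simp add: fun_eq_iff logb'''_def algebra_simps flip: sum_negf)
  qed
  show "continuous_on U (\<lambda>x. logb''' x h l m)" for h l m
    unfolding logb'''_def using continuous_on_grad_curv
    by (intro continuous_intros) auto
qed

lemma q_concave:
  assumes "k \<in> K" "0 \<le> t" "t \<le> 1"
  shows "(1 - t) * q k x + t * q k y \<le> q k ((1 - t) *\<^sub>R x + t *\<^sub>R y)"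
proof -
  have "q k ((1 - t) *\<^sub>R x + t *\<^sub>R y) - ((1 - t) * q k x + t * q k y)
      = - \<gamma> k * (t * (1 - t)) * ((x - y) \<bullet> (x - y))"
    by (simp add: q_def inner_diff_left inner_diff_right inner_commute algebra_simps)
  moreover have "0 \<le> - \<gamma> k * (t * (1 - t)) * ((x - y) \<bullet> (x - y))"
    using assms concave[OF assms(1)] by (simp add: mult_nonpos_nonneg)
  ultimately show ?thesis by linarith
qed

lemma convex_U: "convex U"
proof (rule convexI)
  fix x y and u v :: real
  assume "x \<in> U" "y \<in> U" "0 \<le> u" "0 \<le> v" "u + v = 1"
  have "0 < q k (u *\<^sub>R x + v *\<^sub>R y)" if "k \<in> K" for k
  proof -
    have "0 < q k x" "0 < q k y" using \<open>x \<in> U\<close> \<open>y \<in> U\<close> that by (auto simp: U_def)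
    then have "0 < (1 - v) * q k x + v * q k y"
      using \<open>0 \<le> u\<close> \<open>0 \<le> v\<close> \<open>u + v = 1\<close>
      by (cases "v = 0") (auto intro: add_nonneg_pos)
    also have "\<dots> \<le> q k (u *\<^sub>R x + v *\<^sub>R y)"
      using q_concave[OF that, of v x y] \<open>0 \<le> u\<close> \<open>0 \<le> v\<close> \<open>u + v = 1\<close>
      by (simp add: eq_diff_eq[symmetric])
    finally show ?thesis .
  qed
  then show "u *\<^sub>R x + v *\<^sub>R y \<in> U" by (simp add: U_def)
qed

lemma convex_on_logb:
  assumes "convex S" "S \<subseteq> U"
  shows "convex_on S logb"
  unfolding logb_def sum_negf[symmetric]
proof (rule convex_on_sum_fun[OF finite_K assms(1)])
  fix k assume "k \<in> K"
  then have q: "0 < q k x" if "x \<in> S" for x using that assms(2) by (auto simp: U_def)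
  show "convex_on S (\<lambda>x. - ln (q k x))"
  proof (rule convex_onI[OF _ assms(1)])
    fix t :: real and x y assume t: "0 < t" "t < 1" and "x \<in> S" "y \<in> S"
    then have "(1 - t) *\<^sub>R x + t *\<^sub>R y \<in> S" using assms(1) by (simp add: convex_alt)
    then have "(1 - t) * ln (q k x) + t * ln (q k y) \<le> ln ((1 - t) * q k x + t * q k y)"
      using concave_onD[OF ln_concave, of t "q k x" "q k y"] t q \<open>x \<in> S\<close> \<open>y \<in> S\<close> by simp
    also have "\<dots> \<le> ln (q k ((1 - t) *\<^sub>R x + t *\<^sub>R y))"
      using q_concave[OF \<open>k \<in> K\<close>, of t x y] q t \<open>x \<in> S\<close> \<open>y \<in> S\<close>
        \<open>(1 - t) *\<^sub>R x + t *\<^sub>R y \<in> S\<close>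
      by (subst ln_le_cancel_iff) (auto intro: add_pos_pos)
    finally show "- ln (q k ((1 - t) *\<^sub>R x + t *\<^sub>R y))
        \<le> (1 - t) * - ln (q k x) + t * - ln (q k y)"
      by simp
  qed
qed

lemma self_concordance_forms:
  assumes "x \<in> U"
  shows "\<bar>logb''' x u u u\<bar> \<le> 2 * logb'' x u u powr (3 / 2)"
    and "(logb' x u)\<^sup>2 \<le> real (card K) * logb'' x u u"
proof -
  define A where "A k = grad k x \<bullet> u" for k
  define B where "B k = curv k x * (u \<bullet> u)" for k
  have B_nonneg: "0 \<le> B k" if "k \<in> K" for k
  proof -
    have "0 < q k x" using assms that by (simp add: U_def)
    moreover have "2 * \<gamma> k * (u \<bullet> u) \<le> 0"
      using concave[OF that] by (simp add: mult_nonpos_nonneg)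
    ultimately show ?thesis by (simp add: B_def curv_def divide_nonpos_pos)
  qed
  moreover have logb'': "logb'' x u u = (\<Sum>k\<in>K. (A k)\<^sup>2 + B k)"
    by (simp add: logb''_def A_def B_def power2_eq_square add.commute)
  moreover have "logb''' x u u u = - (\<Sum>k\<in>K. 2 * A k ^ 3 + 3 * A k * B k)"
    by (simp add: logb'''_def A_def B_def power3_eq_cube algebra_simps)
  moreover have "logb' x u = - (\<Sum>k\<in>K. A k)"
    by (simp add: logb'_def A_def)
  ultimately show "\<bar>logb''' x u u u\<bar> \<le> 2 * logb'' x u u powr (3 / 2)"
    using abs_sum_cubic_le[OF finite_K] by simp
  have "(\<Sum>k\<in>K. A k)\<^sup>2 \<le> real (card K) * (\<Sum>k\<in>K. (A k)\<^sup>2)"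
    using sum_squared_le_sum_of_squares[of A K] by (simp add: mult.commute)
  also have "\<dots> \<le> real (card K) * (\<Sum>k\<in>K. (A k)\<^sup>2 + B k)"
    using B_nonneg by (intro mult_left_mono sum_mono) auto
  finally show "(logb' x u)\<^sup>2 \<le> real (card K) * logb'' x u u"
    by (simp add: logb'' logb'_def A_def)
qed

lemma rel_frontier_q_nonpos:
  assumes "affine L" "closed L" "y \<in> rel_frontier (L \<inter> U)"
  shows "\<exists>k\<in>K. q k y \<le> 0"
proof (rule ccontr)
  assume "\<not> (\<exists>k\<in>K. q k y \<le> 0)"
  then have "y \<in> U" by (auto simp: U_def not_le)
  then obtain e where "0 < e" "ball y e \<subseteq> U" using open_U open_contains_ball by blast
  have "y \<in> L"
    using assms(2,3) closure_minimal[of "L \<inter> U" L] by (auto simp: rel_frontier_def)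
  have "affine hull (L \<inter> U) \<subseteq> L" using assms(1) by (intro hull_minimal) auto
  then have "y \<in> rel_interior (L \<inter> U)"
    using \<open>0 < e\<close> \<open>ball y e \<subseteq> U\<close> \<open>y \<in> L\<close> \<open>y \<in> U\<close> unfolding mem_rel_interior_ball by blast
  with assms(3) show False by (simp add: rel_frontier_def)
qed

lemma filterlim_logb_at_top:
  assumes "k0 \<in> K" "q k0 y \<le> 0" "S \<subseteq> U"
  shows "filterlim logb at_top (at y within S)"
proof -
  define F where "F = at y within S"
  define R where "R = K - {k0}"
  \<comment> \<open>the other factors stay bounded near \<open>y\<close>, while \<open>q k0\<close> tends to a nonpositive limit\<close>
  define W where "W = (\<Sum>k\<in>R. ln (q k y + 1))"
  have tendsto: "((\<lambda>x. q k x) \<longlongrightarrow> q k y) F" for k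
    unfolding F_def q_def by (intro tendsto_intros)
  have "eventually (\<lambda>x. Z \<le> logb x) F" for Z
  proof -
    have "eventually (\<lambda>x. x \<in> S) F" by (simp add: F_def eventually_at_filter)
    moreover have "eventually (\<lambda>x. \<forall>k\<in>R. q k x < q k y + 1) F"
      using finite_K
      by (intro eventually_ball_finite) (auto simp: R_def intro: order_tendstoD(2)[OF tendsto])
    moreover have "eventually (\<lambda>x. q k0 x < exp (- Z - W)) F"
      using assms(2) by (intro order_tendstoD(2)[OF tendsto] le_less_trans[OF _ exp_gt_zero])
    ultimately show ?thesis
    proof eventually_elim
      case (elim x)
      then have pos: "0 < q k x" if "k \<in> K" for k using assms(3) that by (auto simp: U_def)
      have "(\<Sum>k\<in>R. ln (q k x)) \<le> W"
      proof -
        have "ln (q k x) \<le> ln (q k y + 1)" if "k \<in> R" for k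
          using less_imp_le[OF elim(2)[rule_format, OF that]] pos that by (simp add: R_def ln_mono)
        then show ?thesis unfolding W_def by (rule sum_mono)
      qed
      moreover have "ln (q k0 x) < - Z - W"
        using elim(3) pos[OF assms(1)] ln_less_cancel_iff[of "q k0 x" "exp (- Z - W)"] by simp
      moreover have "logb x = - ln (q k0 x) - (\<Sum>k\<in>R. ln (q k x))"
        using assms(1) finite_K by (simp add: logb_def R_def sum.remove)
      ultimately show ?case by linarith
    qed
  qed
  then show ?thesis by (simp add: F_def filterlim_at_top)
qed

theorem barrier_logb:
  assumes "affine L" "closed L"
  shows "barrier 1 (\<lambda>x. logb x + \<kappa>) (L \<inter> U)"
    and "theta 1 (\<lambda>x. logb x + \<kappa>) (L \<inter> U) \<le> ereal (real (card K))"
proof -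
  define S where "S = L \<inter> U"
  interpret shifted: C3_forms U "\<lambda>x. logb x + \<kappa>" logb' logb'' logb''' by (rule add_const)
  have "theta 1 (\<lambda>x. logb x + \<kappa>) S \<le> ereal (real (card K))"
    unfolding theta_def
  proof (rule SUP_least, rule Inf_lower, safe)
    fix x assume "x \<in> S"
    then show "\<exists>s. ereal (real (card K)) = ereal s \<and> 0 \<le> s \<and>
        (\<forall>u\<in>dirs S. (dderiv 1 (\<lambda>x. logb x + \<kappa>) x u)\<^sup>2 \<le> s * 1 * dderiv 2 (\<lambda>x. logb x + \<kappa>) x u)"
      using self_concordance_forms(2) shifted.dderiv_eq by (auto simp: S_def simp del: One_nat_def)
  qed
  moreover have "self_concordant 1 (\<lambda>x. logb x + \<kappa>) S"
    unfolding self_concordant_def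
  proof (intro conjI ballI)
    show "convex S"
      unfolding S_def using assms(1) convex_U by (simp add: affine_imp_convex convex_Int)
    then show "convex_on S (\<lambda>x. logb x + \<kappa>)"
      by (intro convex_on_add convex_on_logb) (auto simp: S_def convex_on_const)
    have "affine hull S \<subseteq> L" unfolding S_def using assms(1) by (intro hull_minimal) auto
    then have "S = affine hull S \<inter> U" using hull_subset[of S affine] by (auto simp: S_def)
    then show "openin (top_of_set (affine hull S)) S" using open_U by (metis openin_open_Int)
    show "C3_on S (\<lambda>x. logb x + \<kappa>)" by (rule shifted.C3_on) (simp add: S_def)
    show "\<bar>dderiv 3 (\<lambda>x. logb x + \<kappa>) x u\<bar>
        \<le> 2 * 1 powr (- 1 / 2) * dderiv 2 (\<lambda>x. logb x + \<kappa>) x u powr (3 / 2)" if "x \<in> S" for x u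
      using that self_concordance_forms(1) by (simp add: S_def shifted.dderiv_eq)
  qed simp
  moreover have "filterlim (\<lambda>x. logb x + \<kappa>) at_top (at y within S)"
    if y: "y \<in> rel_frontier S" for y
  proof -
    obtain k where "k \<in> K" "q k y \<le> 0"
      using rel_frontier_q_nonpos[OF assms] y by (auto simp: S_def)
    then have "filterlim logb at_top (at y within S)"
      by (intro filterlim_logb_at_top) (auto simp: S_def)
    then show ?thesis
      using filterlim_tendsto_add_at_top[OF tendsto_const] by (simp add: add.commute)
  qed
  ultimately show "barrier 1 (\<lambda>x. logb x + \<kappa>) (L \<inter> U)"
    and "theta 1 (\<lambda>x. logb x + \<kappa>) (L \<inter> U) \<le> ereal (real (card K))"
    by (auto simp: barrier_def strongly_self_concordant_def S_def le_less_trans)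
qed

end

lemma barrier_betahat:
  fixes C :: "('d::finite \<Rightarrow> 'n::finite) \<Rightarrow> real" and P :: "real^'n^'d"
  shows "barrier 1 (betahat C P) (D1 C P)"
    and "theta 1 (betahat C P) (D1 C P) \<le> ereal (real (CARD('n) ^ CARD('d)) + 1)"
proof -
  define \<alpha> :: "('d \<Rightarrow> 'n) option \<Rightarrow> real" where "\<alpha> = case_option (rsq C P - x0 C \<bullet> x0 C) C"
  define \<beta> where "\<beta> = case_option (2 *\<^sub>R x0 C) (\<lambda>J. - point_marginals J)"
  define \<gamma> :: "('d \<Rightarrow> 'n) option \<Rightarrow> real" where "\<gamma> = case_option (- 1) (\<lambda>_. 0)"
  interpret isotropic_concave_quadratics UNIV \<alpha> \<beta> \<gamma>
    by unfold_locales (auto simp: \<gamma>_def split: option.split)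
  have q: "q None x = rsq C P - (norm (x - x0 C))\<^sup>2" "q (Some J) x = Cx C x J" for x J
    unfolding q_def
    by (simp_all add: \<alpha>_def \<beta>_def \<gamma>_def Cx_eq_inner power2_norm_eq_inner inner_diff_left
        inner_diff_right inner_commute)
  have "betahat C P = (\<lambda>x. logb x + ln (rsq C P))"
    by (simp add: fun_eq_iff betahat_def logb_def sum_UNIV_option q sum_norm_diff_sq)
  moreover have "D1 C P = balanced \<inter> U"
    unfolding D1_def Dom_eq Dhat_def U_def by (auto simp: split_option_all q sum_norm_diff_sq)
  moreover have "card (UNIV :: ('d \<Rightarrow> 'n) option set) = CARD('n) ^ CARD('d) + 1"
    by (simp add: UNIV_option_conv card_insert_if card_image card_fun)
  ultimately show "barrier 1 (betahat C P) (D1 C P)"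
    and "theta 1 (betahat C P) (D1 C P) \<le> ereal (real (CARD('n) ^ CARD('d)) + 1)"
    using barrier_logb[OF affine_balanced closed_balanced, of "ln (rsq C P)"]
    by (simp_all add: add.commute)
qed

theorem lemma3p2:
  fixes C :: "('d::finite \<Rightarrow> 'n::finite) \<Rightarrow> real" and P :: "real^'n^'d"
  assumes "CARD('n) \<ge> 2" and "CARD('d) \<ge> 2" and "C \<noteq> (\<lambda>_. 0)"
    and "\<forall>i. prob_vec (P$i)"
  shows "\<comment> \<open>(a)\<close>
         tau C P \<ge> cmin C
       \<and> \<comment> \<open>(b)\<close>
         ((\<exists>y. (\<forall>J. 0 \<le> Cx C y J) \<and> objective P y = tau C P)
          \<and> (\<forall>y. (\<forall>J. 0 \<le> Cx C y J) \<longrightarrow> objective P y \<le> tau C P))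
       \<and> tau C P = (SUP y\<in>Dhat C. objective P y)
       \<and> tau C P = (SUP y\<in>Dom C. objective P y)
       \<and> \<comment> \<open>(c)\<close>
         (\<forall>x. (\<forall>i j. 0 < P$i$j) \<and> (\<forall>J. 0 \<le> Cx C x J) \<and> objective P x \<ge> cmin C
              \<and> (\<forall>i i'. rowsum x i = rowsum x i')
           \<longrightarrow> sqrt (\<Sum>i\<in>UNIV. (norm (x$i))^2) < 2 * cmax C * sqrt (real CARD('n)) / pmin P)
       \<and> \<comment> \<open>(d)\<close>
         x0 C \<in> Dom C
       \<and> \<comment> \<open>(e)\<close>
         (\<forall>x. (\<forall>i j. 0 < P$i$j) \<and> (\<forall>J. 0 \<le> Cx C x J) \<and> objective P x \<ge> cmin C
              \<and> (\<forall>i i'. rowsum x i = rowsum x i')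
           \<longrightarrow> (\<Sum>i\<in>UNIV. (norm (x$i - x0 C $i))^2) < rsq C P)
       \<and> \<comment> \<open>(f)\<close>
         ((\<forall>i j. 0 < P$i$j) \<longrightarrow>
           (\<forall>y\<in>rel_frontier (D1 C P). dist y (x0 C) \<ge> 1 / sqrt (real CARD('d))))
       \<and> \<comment> \<open>(g)\<close>
         ((\<forall>i j. 0 < P$i$j) \<longrightarrow>
           barrier 1 (betahat C P) (D1 C P)
           \<and> theta 1 (betahat C P) (D1 C P) \<le> ereal (real (CARD('n) ^ CARD('d)) + 1))"
proof -
  note prob = assms(4)
  have "(\<exists>y. (\<forall>J. 0 \<le> Cx C y J) \<and> objective P y = tau C P)
      \<and> (\<forall>y. (\<forall>J. 0 \<le> Cx C y J) \<longrightarrow> objective P y \<le> tau C P)"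
    using tau_attained[OF prob] objective_le_tau[OF prob] by blast
  moreover have "rsq C P > 1" if "\<forall>i j. 0 < P$i$j"
    using rsq_gt_1[OF assms(1,2) prob that] .
  ultimately show ?thesis
    using cmin_le_tau[OF prob] tau_eq_SUP[OF prob] norm_lt_of_dual_feasible[OF assms]
      x0_in_Dom[of C] dist_x0_sq_lt_rsq[OF assms] D1_dist_x0_ge[of C P] barrier_betahat[of C P]
    by (simp add: sum_norm_sq sum_norm_diff_sq)
qed

end
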